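(* Let $\mathbf H\in D$ and $\xi\in T_{\mathbf H}D$, represented by the triple of linear maps $(\phi^{(3)}_\xi,\phi^{(2)}_\xi,\phi^{(1)}_\xi)$. Then $\xi$ is a horizontal vector if and only if $\phi^{(3)}_\xi(H^{(3)})\subseteq H^{(2)}\oplus H^{(0)}$, and in this case $\phi^{(2)}_\xi(H^{(2)})\subseteq H^{(1)}$. Moreover, $\xi$ is transverse if and only if $\phi^{(3)}_\xi(H^{(3)})\subseteq H^{(2)}$. In particular, if $\xi$ is transverse then $\phi^{(p)}_\xi\in\mathrm{Hom}(H^{(p)},H^{(p-1)})$ for $p=1,2,3$.
   Context: $H^3,H^4$ are real vector spaces of dimension $n+1$ with a perfect pairing, $H=H^3\oplus H^4$, $\iota=\mathrm{Id}_{H^3}-\mathrm{Id}_{H^4}$, $Q(u+v,u'+v')=\langle u,v'\rangle-\langle u',v\rangle$ (in the paper, cup product on the cohomology of a compact $G_2$-manifold). $D$ is the set of decompositions $H=H^{(3)}\oplus H^{(2)}\oplus H^{(1)}\oplus H^{(0)}$ with $H^{(3-p)}=\iota(H^{(p)})$, $Q(\iota(H^{(p)}),H^{(q)})=0$ for $p\ne q$, $(-1)^{p+1}Q(\iota(w),w)>0$ for $0\ne w\in H^{(p)}$, $\dim H^{(3)}=1$, $\dim H^{(2)}=n$. $GL(H^3)$ acts on $H$ (naturally on $H^3$, contragrediently on $H^4$, preserving $Q$) and thus on $D$. For $\mathbf H\in D$: $\ell_{\mathbf H}=\{w+\iota(w):w\in H^{(3)}\}\subset H^3$ and $q_{\mathbf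 H}(u)=2Q(\pi^{(0)}u,\pi^{(3)}u)-2Q(\pi^{(1)}u,\pi^{(2)}u)$ ($\pi^{(p)}$ the projections onto $H^{(p)}$), an inner product on $H^3$. A vector $\xi\in T_{\mathbf H}D$ is horizontal iff $\xi=\frac{d}{dt}|_0\exp(ta)\cdot\mathbf H$ for some $q_{\mathbf H}$-self-adjoint $a\in\mathfrak{gl}(H^3)$ (these form the orthogonal complement of the tangent spaces to the fibres of $\mathbf H\mapsto q_{\mathbf H}$ for the natural $GL(H^3)$-invariant metric on $D$); it is transverse iff moreover $a$ can be taken with $q_{\mathbf H}(au,u)=0$ for $u\in\ell_{\mathbf H}$. With $F^{(p)}=H^{(3)}\oplus\dots\oplus H^{(p)}$, a tangent vector $\xi$ represented by a curve $\mathbf H_t$ ($\mathbf H_0=\mathbf H$) determines $\phi^{(p)}_\xi:H^{(p)}\to H^{(p-1)}\oplus\dots\oplus H^{(0)}$, $p=1,2,3$: $\phi^{(p)}_\xi(w)$ is the projection along $F^{(p)}$ of $\frac{d}{dt}|_0w_t$ for any smooth $w_t\in F^{(p)}_t$ with $w_0=w$; the triple determines $\xi$. *)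

theory Defs
  imports "HOL-Analysis.Analysis"
begin

text \<open>Model: H^3 = real^'n (so n+1 = CARD('n)), H^4 = real^'n with the perfect pairing
  given by the dot product; H = H^3 \<oplus> H^4 = real^'n \<times> real^'n.
  A decomposition is a family Hs :: nat \<Rightarrow> H set, of which only Hs 0 .. Hs 3 are used.\<close>

type_synonym ('n) HH = "(real^'n) \<times> (real^'n)"

definition iota :: "('n::finite) HH \<Rightarrow> 'n HH" where
  "iota x = (fst x, - snd x)"

definition Qf :: "'n::finite HH \<Rightarrow> 'n HH \<Rightarrow> real" where
  "Qf x y = fst x \<bullet> snd y - fst y \<bullet> snd x"

definition dsum :: "(nat \<Rightarrow> 'a::real_vector set) \<Rightarrow> bool" where
  "dsum Hs \<longleftrightarrow>
     (\<forall>x. \<exists>f. (\<forall>p::nat\<le>3. f p \<in> Hs p) \<and> x = (\<Sum>p\<le>3. f p)) \<and>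
     (\<forall>f. (\<forall>p::nat\<le>3. f p \<in> Hs p) \<and> (\<Sum>p\<le>3. f p) = 0 \<longrightarrow> (\<forall>p::nat\<le>3. f p = 0))"

definition inD :: "(nat \<Rightarrow> 'n::finite HH set) \<Rightarrow> bool" where
  "inD Hs \<longleftrightarrow>
     (\<forall>p::nat\<le>3. subspace (Hs p)) \<and> dsum Hs \<and>
     (\<forall>p::nat\<le>3. Hs (3 - p) = iota ` Hs p) \<and>
     (\<forall>p::nat\<le>3. \<forall>q::nat\<le>3. p \<noteq> q \<longrightarrow> (\<forall>x\<in>Hs p. \<forall>y\<in>Hs q. Qf (iota x) y = 0)) \<and>
     (\<forall>p::nat\<le>3. \<forall>w\<in>Hs p. w \<noteq> 0 \<longrightarrow> (-1::real) ^ (p + 1) * Qf (iota w) w > 0) \<and>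
     dim (Hs 3) = 1 \<and> dim (Hs 2) = CARD('n) - 1"

definition proj :: "(nat \<Rightarrow> 'n::finite HH set) \<Rightarrow> nat \<Rightarrow> 'n HH \<Rightarrow> 'n HH" where
  "proj Hs p x = (THE y. \<exists>f. (\<forall>q::nat\<le>3. f q \<in> Hs q) \<and> x = (\<Sum>q\<le>3. f q) \<and> y = f p)"

definition Fset :: "(nat \<Rightarrow> 'n::finite HH set) \<Rightarrow> nat \<Rightarrow> 'n HH set" where
  "Fset Hs p = {x. \<exists>f. (\<forall>q\<in>{p..3}. f q \<in> Hs q) \<and> x = (\<Sum>q=p..3. f q)}"

definition projAlongF :: "(nat \<Rightarrow> 'n::finite HH set) \<Rightarrow> nat \<Rightarrow> 'n HH \<Rightarrow> 'n HH" where
  "projAlongF Hs p x = (\<Sum>q<p. proj Hs q x)"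

text \<open>Smooth structure: D is regarded as a subset of End(H)^4 via the projections
  \<pi>^(0..3); a tangent vector at Hs is the derivative at 0 of the projections along a
  curve in D through Hs (differentiable at 0).\<close>
definition tcurve :: "(nat \<Rightarrow> 'n::finite HH set) \<Rightarrow> (real \<Rightarrow> nat \<Rightarrow> 'n HH set) \<Rightarrow> bool" where
  "tcurve Hs c \<longleftrightarrow> (\<forall>p::nat\<le>3. c 0 p = Hs p) \<and> (\<forall>\<^sub>F t in nhds 0. inD (c t)) \<and>
     (\<forall>p::nat\<le>3. \<forall>x. (\<lambda>t. proj (c t) p x) differentiable (at 0))"

definition tvec :: "(real \<Rightarrow> nat \<Rightarrow> 'n::finite HH set) \<Rightarrow> nat \<Rightarrow> 'n HH \<Rightarrow> 'n HH" where
  "tvec c p x = vector_derivative (\<lambda>t. proj (c t) p x) (at 0)"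

definition phi :: "(real \<Rightarrow> nat \<Rightarrow> 'n::finite HH set) \<Rightarrow> nat \<Rightarrow> 'n HH \<Rightarrow> 'n HH" where
  "phi c p w = (THE v. \<forall>wt :: real \<Rightarrow> 'n HH.
      (\<forall>\<^sub>F t in nhds 0. wt t \<in> Fset (c t) p) \<and> wt 0 = w \<and> wt differentiable (at 0)
      \<longrightarrow> projAlongF (c 0) p (vector_derivative wt (at 0)) = v)"

definition lexp :: "(real^'n::finite \<Rightarrow> real^'n) \<Rightarrow> real^'n \<Rightarrow> real^'n" where
  "lexp a u = (\<Sum>k. (1 / fact k) *\<^sub>R (a ^^ k) u)"

definition act :: "(real^'n::finite \<Rightarrow> real^'n) \<Rightarrow> 'n HH \<Rightarrow> 'n HH" where
  "act g x = (g (fst x), adjoint (inv g) (snd x))"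

definition actD :: "(real^'n::finite \<Rightarrow> real^'n) \<Rightarrow> (nat \<Rightarrow> 'n HH set) \<Rightarrow> nat \<Rightarrow> 'n HH set" where
  "actD g Hs = (\<lambda>p. act g ` Hs p)"

definition qH :: "(nat \<Rightarrow> 'n::finite HH set) \<Rightarrow> real^'n \<Rightarrow> real" where
  "qH Hs u = 2 * Qf (proj Hs 0 (u, 0)) (proj Hs 3 (u, 0)) - 2 * Qf (proj Hs 1 (u, 0)) (proj Hs 2 (u, 0))"

definition qHb :: "(nat \<Rightarrow> 'n::finite HH set) \<Rightarrow> real^'n \<Rightarrow> real^'n \<Rightarrow> real" where
  "qHb Hs u v = (qH Hs (u + v) - qH Hs u - qH Hs v) / 2"

definition ell :: "(nat \<Rightarrow> 'n::finite HH set) \<Rightarrow> (real^'n) set" where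
  "ell Hs = {u. \<exists>w\<in>Hs 3. w + iota w = (u, 0)}"

definition qselfadj :: "(nat \<Rightarrow> 'n::finite HH set) \<Rightarrow> (real^'n \<Rightarrow> real^'n) \<Rightarrow> bool" where
  "qselfadj Hs a \<longleftrightarrow> linear a \<and> (\<forall>u v. qHb Hs (a u) v = qHb Hs u (a v))"

definition is_exp_tangent :: "(nat \<Rightarrow> 'n::finite HH set) \<Rightarrow> (real \<Rightarrow> nat \<Rightarrow> 'n HH set) \<Rightarrow> (real^'n \<Rightarrow> real^'n) \<Rightarrow> bool" where
  "is_exp_tangent Hs c a \<longleftrightarrow>
     (\<forall>p::nat\<le>3. \<forall>x. tvec c p x = tvec (\<lambda>t. actD (lexp (\<lambda>u. t *\<^sub>R a u)) Hs) p x)"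

definition horizontal :: "(nat \<Rightarrow> 'n::finite HH set) \<Rightarrow> (real \<Rightarrow> nat \<Rightarrow> 'n HH set) \<Rightarrow> bool" where
  "horizontal Hs c \<longleftrightarrow> (\<exists>a. qselfadj Hs a \<and> is_exp_tangent Hs c a)"

definition transverse :: "(nat \<Rightarrow> 'n::finite HH set) \<Rightarrow> (real \<Rightarrow> nat \<Rightarrow> 'n HH set) \<Rightarrow> bool" where
  "transverse Hs c \<longleftrightarrow> (\<exists>a. qselfadj Hs a \<and> (\<forall>u\<in>ell Hs. qHb Hs (a u) u = 0) \<and> is_exp_tangent Hs c a)"

end

theory Submission
  imports Defs
begin

(* A tangent vector xi at H is determined by the derivatives D p of the projections P p onto
   the summands H^(p). With X = (SUM p. D p o P p) one gets D q = X o P q - P q o X, where X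
   commutes with iota and is skew for the symmetric form Qsym x y = Q (iota x) y; every such
   operator is the infinitesimal action dact s of an endomorphism s of H^3. Let J act on H^(p)
   by (-1)^(p+1). Then a is q_H-self-adjoint iff dact a anticommutes with J, and a J-odd
   operator T satisfies P r o T o P q = 0 whenever r and q have the same parity. Hence xi is
   horizontal iff P 1 o D 3 o P 3 = 0: necessity by the parity rule, sufficiency because then
   the J-even part of X commutes with every P q, so the J-odd part S = dact s of X already
   generates xi. As phi^(3) = (P 0 + P 1 + P 2) o D 3 on H^(3), this is the first claim, and
   horizontality also kills P 0 o D 2 o P 2, i.e. the H^(0)-component of phi^(2). The condition
   on l_H translates into P 0 o D 3 o P 3 = 0, because H^(3) is a line and Qsym is definite on
   H^(0) = iota H^(3). *)

section \<open>Exponentials of endomorphisms\<close>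

(* The library gives 'a =>L 'a no Banach algebra structure; endo is a copy of that type with
   composition as multiplication, so that exp of an endomorphism is available. *)
typedef (overloaded) 'a endo = "UNIV :: ('a::euclidean_space \<Rightarrow>\<^sub>L 'a) set"
  morphisms blinfun_of_endo endo_of_blinfun ..

setup_lifting type_definition_endo

instantiation endo :: (euclidean_space) real_normed_algebra_1
begin

lift_definition norm_endo :: "'a endo \<Rightarrow> real" is norm .
lift_definition minus_endo :: "'a endo \<Rightarrow> 'a endo \<Rightarrow> 'a endo" is "(-)" .
lift_definition plus_endo :: "'a endo \<Rightarrow> 'a endo \<Rightarrow> 'a endo" is "(+)" .
lift_definition uminus_endo :: "'a endo \<Rightarrow> 'a endo" is uminus .
lift_definition zero_endo :: "'a endo" is 0 .
lift_definition scaleR_endo :: "real \<Rightarrow> 'a endo \<Rightarrow> 'a endo" is scaleR .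
lift_definition times_endo :: "'a endo \<Rightarrow> 'a endo \<Rightarrow> 'a endo" is blinfun_compose .
lift_definition one_endo :: "'a endo" is id_blinfun .

definition dist_endo :: "'a endo \<Rightarrow> 'a endo \<Rightarrow> real"
  where "dist_endo a b = norm (a - b)"

definition uniformity_endo :: "('a endo \<times> 'a endo) filter"
  where "uniformity_endo = (INF e\<in>{0 <..}. principal {(x, y). dist x y < e})"

definition open_endo :: "'a endo set \<Rightarrow> bool"
  where "open_endo S = (\<forall>x\<in>S. \<forall>\<^sub>F (x', y) in uniformity. x' = x \<longrightarrow> y \<in> S)"

definition sgn_endo :: "'a endo \<Rightarrow> 'a endo"
  where "sgn_endo x = inverse (norm x) *\<^sub>R x"

instance
proof
  fix a b c :: "'a endo" and r s :: real
  show "a + b + c = a + (b + c)" "a + b = b + a" "0 + a = a" "- a + a = 0" "a - b = a + - b"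
    by (transfer; simp add: algebra_simps)+
  show "r *\<^sub>R (a + b) = r *\<^sub>R a + r *\<^sub>R b" "(r + s) *\<^sub>R a = r *\<^sub>R a + s *\<^sub>R a"
    "r *\<^sub>R s *\<^sub>R a = (r * s) *\<^sub>R a" "1 *\<^sub>R a = a"
    by (transfer; simp add: scaleR_add_right scaleR_add_left)+
  show "a * b * c = a * (b * c)" "(a + b) * c = a * c + b * c" "a * (b + c) = a * b + a * c"
    "1 * a = a" "a * 1 = a" "r *\<^sub>R a * b = r *\<^sub>R (a * b)" "a * r *\<^sub>R b = r *\<^sub>R (a * b)"
    by (transfer; auto intro: blinfun_eqI simp: blinfun.add_left blinfun.add_right blinfun.scaleR_left blinfun.scaleR_right)+
  show "(0::'a endo) \<noteq> 1"
    by transfer (metis norm_blinfun_id norm_zero zero_neq_one)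
  show "dist a b = norm (a - b)" "sgn a = inverse (norm a) *\<^sub>R a"
    "(uniformity :: ('a endo \<times> 'a endo) filter) = (INF e\<in>{0 <..}. principal {(x, y). dist x y < e})"
    by (simp_all add: dist_endo_def sgn_endo_def uniformity_endo_def)
  show "open (U :: 'a endo set) = (\<forall>x\<in>U. \<forall>\<^sub>F (x', y) in uniformity. x' = x \<longrightarrow> y \<in> U)" for U
    by (simp add: open_endo_def)
  show "(norm a = 0) = (a = 0)" "norm (a + b) \<le> norm a + norm b" "norm (r *\<^sub>R a) = \<bar>r\<bar> * norm a"
    "norm (a * b) \<le> norm a * norm b" "norm (1::'a endo) = 1"
    by (transfer; simp add: norm_triangle_ineq norm_blinfun_compose)+
qed

end

instance endo :: (euclidean_space) banach
proof
  fix X :: "nat \<Rightarrow> 'a endo"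
  assume "Cauchy X"
  then have "Cauchy (\<lambda>n. blinfun_of_endo (X n))"
    unfolding Cauchy_def dist_norm by transfer
  then obtain L where "(\<lambda>n. blinfun_of_endo (X n)) \<longlonglongrightarrow> L"
    using Cauchy_convergent convergent_def by blast
  then have "X \<longlonglongrightarrow> endo_of_blinfun L"
    unfolding LIMSEQ_iff by transfer
  then show "convergent X"
    by (auto simp: convergent_def)
qed

definition endo_apply :: "'a::euclidean_space endo \<Rightarrow> 'a \<Rightarrow> 'a" where
  "endo_apply X = blinfun_apply (blinfun_of_endo X)"

definition endo_of :: "('a::euclidean_space \<Rightarrow> 'a) \<Rightarrow> 'a endo" where
  "endo_of a = endo_of_blinfun (Blinfun a)"

lemma endo_apply_mult: "endo_apply (X * Y) u = endo_apply X (endo_apply Y u)"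
  by (simp add: endo_apply_def times_endo.rep_eq)

lemma endo_apply_one: "endo_apply 1 = id"
  by (simp add: endo_apply_def one_endo.rep_eq fun_eq_iff)

lemma endo_apply_power: "endo_apply (X ^ n) = endo_apply X ^^ n"
  by (induction n) (simp_all add: endo_apply_one endo_apply_mult fun_eq_iff)

lemma endo_apply_scaleR: "endo_apply (r *\<^sub>R X) u = r *\<^sub>R endo_apply X u"
  by (simp add: endo_apply_def scaleR_endo.rep_eq blinfun.scaleR_left)

lemma bounded_linear_endo_apply_left: "bounded_linear (\<lambda>X. endo_apply X u)"
proof (rule bounded_linear_intro[where K = "norm u"])
  fix X Y :: "'a endo" and r :: real
  show "endo_apply (X + Y) u = endo_apply X u + endo_apply Y u"
    by (simp add: endo_apply_def plus_endo.rep_eq blinfun.add_left)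
  show "endo_apply (r *\<^sub>R X) u = r *\<^sub>R endo_apply X u"
    by (rule endo_apply_scaleR)
  show "norm (endo_apply X u) \<le> norm X * norm u"
    by (simp add: endo_apply_def norm_endo.rep_eq norm_blinfun)
qed

lemma linear_endo_apply: "linear (endo_apply X)"
  unfolding endo_apply_def by (rule bounded_linear.linear[OF blinfun.bounded_linear_right])

lemma endo_apply_endo_of: "linear a \<Longrightarrow> endo_apply (endo_of a) = a"
  by (simp add: endo_apply_def endo_of_def endo_of_blinfun_inverse bounded_linear_Blinfun_apply
      linear_conv_bounded_linear)

lemma lexp_eq_exp:
  assumes "linear a"
  shows "lexp (\<lambda>u. t *\<^sub>R a u) = endo_apply (exp (t *\<^sub>R endo_of a))"
proof
  fix u
  have "endo_apply (exp (t *\<^sub>R endo_of a)) u = (\<Sum>n. endo_apply ((t *\<^sub>R endo_of a) ^ n /\<^sub>R fact n) u)"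
    unfolding exp_def by (rule bounded_linear.suminf[OF bounded_linear_endo_apply_left summable_exp_generic])
  also have "\<dots> = (\<Sum>n. (1 / fact n) *\<^sub>R ((\<lambda>u. t *\<^sub>R a u) ^^ n) u)"
  proof -
    have "endo_apply (t *\<^sub>R endo_of a) = (\<lambda>u. t *\<^sub>R a u)"
      by (simp add: fun_eq_iff endo_apply_scaleR endo_apply_endo_of assms)
    then show ?thesis
      by (simp only: endo_apply_scaleR endo_apply_power divide_inverse mult_1)
  qed
  finally show "lexp (\<lambda>u. t *\<^sub>R a u) u = endo_apply (exp (t *\<^sub>R endo_of a)) u"
    by (simp add: lexp_def)
qed

definition exp_flow :: "(real^'n::finite \<Rightarrow> real^'n) \<Rightarrow> real \<Rightarrow> real^'n \<Rightarrow> real^'n" where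
  "exp_flow a t = lexp (\<lambda>u. t *\<^sub>R a u)"

lemma exp_flow_eq_exp: "linear a \<Longrightarrow> exp_flow a t = endo_apply (exp (t *\<^sub>R endo_of a))"
  by (simp add: exp_flow_def lexp_eq_exp)

lemma linear_exp_flow: "linear a \<Longrightarrow> linear (exp_flow a t)"
  by (simp add: exp_flow_eq_exp linear_endo_apply)

lemma exp_flow_0: "linear a \<Longrightarrow> exp_flow a 0 = id"
  by (simp add: exp_flow_eq_exp endo_apply_one)

lemma exp_flow_inverse:
  assumes "linear a"
  shows "exp_flow a t (exp_flow a (- t) u) = u"
proof -
  have "exp (t *\<^sub>R endo_of a) * exp ((- t) *\<^sub>R endo_of a) = 1"
    by (simp flip: exp_add_commuting)
  then show ?thesis
    by (simp add: exp_flow_eq_exp[OF assms] endo_apply_one flip: endo_apply_mult)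
qed

lemma exp_flow_uminus: "exp_flow a (- t) = exp_flow (\<lambda>u. - a u) t"
  by (simp add: exp_flow_def)

lemma has_vector_derivative_exp_flow:
  assumes "linear a"
  shows "((\<lambda>t. exp_flow a t u) has_vector_derivative a u) (at 0)"
proof -
  have "((\<lambda>t. exp (t *\<^sub>R endo_of a)) has_vector_derivative endo_of a) (at 0)"
    using exp_scaleR_has_vector_derivative_right[of "endo_of a" 0] by simp
  from bounded_linear.has_vector_derivative[OF bounded_linear_endo_apply_left this]
  show ?thesis
    by (simp add: exp_flow_eq_exp[OF assms] endo_apply_endo_of[OF assms])
qed

section \<open>The symmetric form and the infinitesimal action\<close>

lemma vector_eq_neg_iff: "(x::'a::real_vector) = - x \<longleftrightarrow> x = 0"
proof
  assume "x = - x"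
  then have "2 *\<^sub>R x = 0"
    by (metis add.right_inverse scaleR_2)
  then show "x = 0"
    by simp
qed simp

definition Qsym :: "'n::finite HH \<Rightarrow> 'n HH \<Rightarrow> real" where
  "Qsym x y = fst x \<bullet> snd y + fst y \<bullet> snd x"

lemma Qsym_commute: "Qsym x y = Qsym y x"
  by (simp add: Qsym_def)

lemma Qsym_simps [simp]:
  "Qsym (x + y) z = Qsym x z + Qsym y z" "Qsym z (x + y) = Qsym z x + Qsym z y"
  "Qsym (x - y) z = Qsym x z - Qsym y z" "Qsym z (x - y) = Qsym z x - Qsym z y"
  "Qsym (- x) z = - Qsym x z" "Qsym z (- x) = - Qsym z x"
  "Qsym (r *\<^sub>R x) z = r * Qsym x z" "Qsym z (r *\<^sub>R x) = r * Qsym z x"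
  "Qsym 0 z = 0" "Qsym z 0 = 0"
  by (simp_all add: Qsym_def algebra_simps)

lemma Qsym_sum_left: "Qsym (\<Sum>a\<in>A. f a) z = (\<Sum>a\<in>A. Qsym (f a) z)"
  and Qsym_sum_right: "Qsym z (\<Sum>a\<in>A. f a) = (\<Sum>a\<in>A. Qsym z (f a))"
  by (simp_all add: Qsym_def fst_sum snd_sum inner_sum_left inner_sum_right sum.distrib)

lemma bounded_linear_Qsym_left: "bounded_linear (\<lambda>x. Qsym x y)"
  and bounded_linear_Qsym_right: "bounded_linear (\<lambda>y. Qsym x y)"
  by (simp_all add: linear_conv_bounded_linear[symmetric] linearI)

lemma Qsym_nondegenerate:
  assumes "\<And>y. Qsym x y = 0"
  shows "x = 0"
proof -
  have "fst x \<bullet> fst x + snd x \<bullet> snd x = 0"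
    using assms[of "(snd x, fst x)"] by (simp add: Qsym_def inner_commute)
  then show ?thesis
    by (simp add: prod_eq_iff add_nonneg_eq_0_iff)
qed

lemma iota_simps [simp]:
  "fst (iota x) = fst x" "snd (iota x) = - snd x" "iota (iota x) = x"
  "iota (x + y) = iota x + iota y" "iota (x - y) = iota x - iota y" "iota (- x) = - iota x"
  "iota (r *\<^sub>R x) = r *\<^sub>R iota x" "iota x = 0 \<longleftrightarrow> x = 0"
  by (simp_all add: iota_def prod_eq_iff)

lemma linear_iota: "linear iota"
  by (rule linearI) simp_all

lemma iota_Pair [simp]: "iota (u, y) = (u, - y)"
  by (simp add: iota_def)

lemma iota_eq_self_iff: "iota v = v \<longleftrightarrow> snd v = 0"
  unfolding iota_def prod_eq_iff using vector_eq_neg_iff[of "snd v"] by auto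

lemma iota_eq_neg_iff: "iota v = - v \<longleftrightarrow> fst v = 0"
  unfolding iota_def prod_eq_iff using vector_eq_neg_iff[of "fst v"] by auto

lemma plus_iota_eq: "w + iota w = (fst w + fst w, 0)"
  by (simp add: iota_def prod_eq_iff)

lemma Qsym_iota_left: "Qsym (iota x) y = - Qsym x (iota y)"
  by (simp add: Qsym_def)

lemma Qsym_iota_iota [simp]: "Qsym (iota x) (iota y) = - Qsym x y"
  by (simp add: Qsym_def)

lemma Qf_eq_Qsym: "Qf x y = Qsym (iota x) y"
  by (simp add: Qsym_def Qf_def)

lemma adjoint_uminus:
  fixes a :: "'a::euclidean_space \<Rightarrow> 'b::euclidean_space"
  assumes "linear a"
  shows "adjoint (\<lambda>u. - a u) = (\<lambda>y. - adjoint a y)"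
  by (rule adjoint_unique) (simp add: adjoint_clauses(1)[OF assms])

(* The derivative of act (exp (t a)) at t = 0, see has_vector_derivative_act_exp_flow. *)
definition dact :: "(real^'n::finite \<Rightarrow> real^'n) \<Rightarrow> 'n HH \<Rightarrow> 'n HH" where
  "dact a v = (a (fst v), - adjoint a (snd v))"

lemma linear_dact: "linear a \<Longrightarrow> linear (dact a)"
  unfolding dact_def by (rule linearI) (simp_all add: linear_add linear_scale adjoint_linear)

lemma dact_iota: "linear a \<Longrightarrow> dact a (iota v) = iota (dact a v)"
  by (simp add: dact_def iota_def linear_neg[OF adjoint_linear])

lemma dact_Pair_0 [simp]: "linear a \<Longrightarrow> dact a (u, 0) = (a u, 0)"
  by (simp add: dact_def linear_0[OF adjoint_linear])

lemma Qsym_dact: "linear a \<Longrightarrow> Qsym (dact a v) w = - Qsym v (dact a w)"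
  by (simp add: dact_def Qsym_def adjoint_clauses inner_commute)

lemma dact_uminus: "linear a \<Longrightarrow> dact (\<lambda>u. - a u) v = - dact a v"
  by (simp add: dact_def adjoint_uminus)

lemma ex_dact_eq:
  assumes lin: "linear T" and iota: "\<And>v. T (iota v) = iota (T v)"
    and skew: "\<And>v w. Qsym (T v) w = - Qsym v (T w)"
  shows "\<exists>s. linear s \<and> T = dact s"
proof -
  define s where "s u = fst (T (u, 0))" for u
  have "linear s"
    unfolding s_def by (intro linear_compose[OF _ linear_fst, unfolded o_def]
        linear_compose[OF _ lin, unfolded o_def]) (simp add: linearI)
  have snd_T_Pair_0: "snd (T (u, 0)) = 0" for u
    using iota[of "(u, 0)"] by (simp add: iota_def prod_eq_iff vector_eq_neg_iff)
  have fst_T_0_Pair: "fst (T (0, y)) = 0" for y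
    using iota[of "(0, y)"] linear_neg[OF lin, of "(0, y)"]
    by (simp add: iota_def prod_eq_iff vector_eq_neg_iff)
  have snd_T_0_Pair: "snd (T (0, y)) = - adjoint s y" for y
  proof (rule vector_eq_ldot[THEN iffD1], rule allI)
    fix u
    show "u \<bullet> snd (T (0, y)) = u \<bullet> - adjoint s y"
      using skew[of "(u, 0)" "(0, y)"]
      by (simp add: Qsym_def s_def fst_T_0_Pair adjoint_clauses[OF \<open>linear s\<close>])
  qed
  have "T v = dact s v" for v
    using linear_add[OF lin, of "(fst v, 0)" "(0, snd v)"]
    by (simp add: dact_def prod_eq_iff snd_T_Pair_0 fst_T_0_Pair snd_T_0_Pair s_def)
  then show ?thesis
    using \<open>linear s\<close> by blast
qed

section \<open>Projections of a direct sum decomposition\<close>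

(* Keep 1 a numeral, so that the simp rules stated for P 1 and D 1 below apply. *)
declare One_nat_def [simp del]

lemma sum_atMost_3: "(\<Sum>q\<le>3::nat. f q) = f 0 + f 1 + f 2 + f 3"
proof -
  have "{..3::nat} = {0, 1, 2, 3}"
    by auto
  then show ?thesis
    by (simp add: add.assoc)
qed

definition decomposition :: "(nat \<Rightarrow> 'a::real_vector set) \<Rightarrow> bool" where
  "decomposition Hs \<longleftrightarrow> dsum Hs \<and> (\<forall>p\<le>3. subspace (Hs p))"

lemma inD_decomposition: "inD Hs \<Longrightarrow> decomposition Hs"
  unfolding inD_def decomposition_def by blast

lemma proj_unique:
  assumes Hs: "decomposition Hs" and f: "\<forall>q\<le>3. f q \<in> Hs q" and x: "x = (\<Sum>q\<le>3. f q)"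
    and p: "p \<le> 3"
  shows "proj Hs p x = f p"
  unfolding proj_def
proof (rule the_equality)
  show "\<exists>g. (\<forall>q\<le>3. g q \<in> Hs q) \<and> x = (\<Sum>q\<le>3. g q) \<and> f p = g p"
    using f x by (intro exI[of _ f]) simp
next
  fix y
  assume "\<exists>g. (\<forall>q\<le>3. g q \<in> Hs q) \<and> x = (\<Sum>q\<le>3. g q) \<and> y = g p"
  then obtain g where g: "\<forall>q\<le>3. g q \<in> Hs q" "x = (\<Sum>q\<le>3. g q)" "y = g p"
    by (elim exE conjE)
  have unique: "\<forall>h. (\<forall>q\<le>3. h q \<in> Hs q) \<and> (\<Sum>q\<le>3. h q) = 0 \<longrightarrow> (\<forall>q\<le>3. h q = 0)"
    using Hs unfolding decomposition_def dsum_def by (elim conjE)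
  have "\<forall>q\<le>3. f q - g q \<in> Hs q"
    using Hs f g(1) unfolding decomposition_def by (blast intro: subspace_diff)
  moreover have "(\<Sum>q\<le>3. f q - g q) = 0"
    using x g(2) by (simp add: sum_subtractf)
  ultimately have "\<forall>q\<le>3. f q - g q = 0"
    using unique[rule_format, of "\<lambda>q. f q - g q"] by blast
  then show "y = f p"
    using p g(3) by simp
qed

lemma decomposition_obtain:
  assumes "decomposition Hs"
  obtains f where "\<forall>q\<le>3. f q \<in> Hs q" "x = (\<Sum>q\<le>3. f q)"
  using assms unfolding decomposition_def dsum_def by blast

lemma proj_in:
  assumes "decomposition Hs" "p \<le> 3"
  shows "proj Hs p x \<in> Hs p"
proof -
  obtain f where "\<forall>q\<le>3. f q \<in> Hs q" "x = (\<Sum>q\<le>3. f q)"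
    using decomposition_obtain[OF assms(1)] .
  then show ?thesis
    using proj_unique[OF assms(1)] assms(2) by simp
qed

lemma sum_proj:
  assumes "decomposition Hs"
  shows "(\<Sum>q\<le>3. proj Hs q x) = x"
proof -
  obtain f where f: "\<forall>q\<le>3. f q \<in> Hs q" and x: "x = (\<Sum>q\<le>3. f q)"
    using decomposition_obtain[OF assms] .
  have "(\<Sum>q\<le>3. proj Hs q x) = (\<Sum>q\<le>3. f q)"
    using proj_unique[OF assms f x] by (intro sum.cong) auto
  then show ?thesis
    using x by simp
qed

lemma proj_eq_if_in:
  assumes Hs: "decomposition Hs" and p: "p \<le> 3" and q: "q \<le> 3" and x: "x \<in> Hs q"
  shows "proj Hs p x = (if p = q then x else 0)"
proof (rule proj_unique[OF Hs _ _ p])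
  show "\<forall>r\<le>3. (if r = q then x else 0) \<in> Hs r"
    using Hs x by (simp add: decomposition_def subspace_0)
qed (use q in simp)

lemma linear_proj:
  assumes Hs: "decomposition Hs" and p: "p \<le> 3"
  shows "linear (proj Hs p)"
proof (rule linearI)
  have sub: "subspace (Hs q)" if "q \<le> 3" for q
    using Hs that by (simp add: decomposition_def)
  fix x y :: "'a HH" and r :: real
  have "\<forall>q\<le>3. proj Hs q x + proj Hs q y \<in> Hs q"
    using sub proj_in[OF Hs] by (blast intro: subspace_add)
  moreover have "x + y = (\<Sum>q\<le>3. proj Hs q x + proj Hs q y)"
    by (simp add: sum.distrib sum_proj[OF Hs])
  ultimately show "proj Hs p (x + y) = proj Hs p x + proj Hs p y"
    by (rule proj_unique[OF Hs _ _ p])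
  have "\<forall>q\<le>3. r *\<^sub>R proj Hs q x \<in> Hs q"
    using sub proj_in[OF Hs] by (blast intro: subspace_scale)
  moreover have "r *\<^sub>R x = (\<Sum>q\<le>3. r *\<^sub>R proj Hs q x)"
    by (simp add: sum_proj[OF Hs] flip: scaleR_sum_right)
  ultimately show "proj Hs p (r *\<^sub>R x) = r *\<^sub>R proj Hs p x"
    by (rule proj_unique[OF Hs _ _ p])
qed

lemma proj_proj:
  "decomposition Hs \<Longrightarrow> p \<le> 3 \<Longrightarrow> q \<le> 3 \<Longrightarrow> proj Hs p (proj Hs q x) = (if p = q then proj Hs q x else 0)"
  by (simp add: proj_eq_if_in proj_in)

lemma proj_cong: "(\<And>p. p \<le> 3 \<Longrightarrow> Hs' p = Hs p) \<Longrightarrow> proj Hs' = proj Hs"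
  unfolding proj_def by (intro ext) (simp cong: conj_cong)

lemma decomposition_image:
  fixes Hs :: "nat \<Rightarrow> 'n::finite HH set"
  assumes Hs: "decomposition Hs" and G: "linear G" "linear G'"
    and inverse: "\<And>v. G (G' v) = v" "\<And>v. G' (G v) = v"
  shows "decomposition (\<lambda>q. G ` Hs q)"
proof -
  have "\<forall>q\<le>3. h q = 0" if h: "\<forall>q\<le>3. h q \<in> G ` Hs q" "(\<Sum>q\<le>3. h q) = 0" for h
  proof (intro allI impI)
    fix q :: nat
    assume q: "q \<le> 3"
    have "\<forall>r\<le>3. G' (h r) \<in> Hs r"
      using h(1) inverse(2) by auto
    moreover have "0 = (\<Sum>r\<le>3. G' (h r))"
      using h(2) by (simp add: linear_sum[OF G(2), symmetric] linear_0[OF G(2)])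
    ultimately have "proj Hs q 0 = G' (h q)"
      by (rule proj_unique[OF Hs _ _ q])
    then show "h q = 0"
      using inverse(1)[of "h q"] by (simp add: linear_0[OF linear_proj[OF Hs q]] linear_0[OF G(1)])
  qed
  moreover have "\<exists>f. (\<forall>q\<le>3. f q \<in> G ` Hs q) \<and> x = (\<Sum>q\<le>3. f q)" for x
  proof (intro exI conjI)
    show "\<forall>q\<le>3. G (proj Hs q (G' x)) \<in> G ` Hs q"
      using proj_in[OF Hs] by blast
    show "x = (\<Sum>q\<le>3. G (proj Hs q (G' x)))"
      by (simp add: linear_sum[OF G(1), symmetric] sum_proj[OF Hs] inverse)
  qed
  moreover have "\<forall>q\<le>3. subspace (G ` Hs q)"
    using Hs G(1) by (simp add: decomposition_def linear_subspace_image)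
  ultimately show ?thesis
    unfolding decomposition_def dsum_def by blast
qed

lemma proj_image:
  assumes Hs: "decomposition Hs" and G: "linear G" "linear G'"
    and inverse: "\<And>v. G (G' v) = v" "\<And>v. G' (G v) = v" and p: "p \<le> 3"
  shows "proj (\<lambda>q. G ` Hs q) p x = G (proj Hs p (G' x))"
proof (rule proj_unique[OF decomposition_image[OF assms(1-5)] _ _ p])
  show "\<forall>q\<le>3. G (proj Hs q (G' x)) \<in> G ` Hs q"
    using proj_in[OF Hs] by blast
  show "x = (\<Sum>q\<le>3. G (proj Hs q (G' x)))"
    by (simp add: linear_sum[OF G(1), symmetric] sum_proj[OF Hs] inverse)
qed

lemma inD_mirror: "inD Hs \<Longrightarrow> p \<le> 3 \<Longrightarrow> Hs (3 - p) = iota ` Hs p"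
  unfolding inD_def by blast

lemma inD_definite:
  assumes "inD Hs" "p \<le> 3" "w \<in> Hs p" "w \<noteq> 0"
  shows "(-1) ^ (p + 1) * Qsym w w > 0"
proof -
  have "\<forall>p\<le>3. \<forall>w\<in>Hs p. w \<noteq> 0 \<longrightarrow> (-1::real) ^ (p + 1) * Qf (iota w) w > 0"
    using assms(1) unfolding inD_def by (elim conjE)
  then show ?thesis
    using assms(2-4) by (simp add: Qf_eq_Qsym)
qed

lemma inD_dim_3: "inD Hs \<Longrightarrow> dim (Hs 3) = 1"
  unfolding inD_def by (elim conjE)

lemma inD_orthogonal:
  "inD Hs \<Longrightarrow> p \<le> 3 \<Longrightarrow> q \<le> 3 \<Longrightarrow> p \<noteq> q \<Longrightarrow> x \<in> Hs p \<Longrightarrow> y \<in> Hs q \<Longrightarrow> Qsym x y = 0"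
  unfolding inD_def Qf_eq_Qsym by (metis iota_simps(3))

lemma proj_iota:
  assumes D: "inD Hs" and p: "p \<le> 3"
  shows "proj Hs (3 - p) x = iota (proj Hs p (iota x))"
proof -
  have Hs: "decomposition Hs"
    using D by (rule inD_decomposition)
  have mirror: "Hs r = iota ` Hs (3 - r)" if "r \<le> 3" for r
    using inD_mirror[OF D diff_le_self, of r] that by simp
  have "\<forall>r\<le>3. iota (proj Hs (3 - r) (iota x)) \<in> Hs r"
  proof (intro allI impI)
    fix r :: nat
    assume "r \<le> 3"
    then show "iota (proj Hs (3 - r) (iota x)) \<in> Hs r"
      unfolding mirror[OF \<open>r \<le> 3\<close>] by (intro imageI proj_in[OF Hs diff_le_self])
  qed
  moreover have "x = (\<Sum>r\<le>3. iota (proj Hs (3 - r) (iota x)))"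
  proof -
    have "(3::nat) - 1 = 2" "(3::nat) - 2 = 1"
      by simp_all
    then have "(\<Sum>r\<le>3. iota (proj Hs (3 - r) (iota x))) = iota (\<Sum>r\<le>3. proj Hs r (iota x))"
      by (simp only: sum_atMost_3 diff_self_eq_0 diff_zero iota_simps add_ac)
    then show ?thesis
      by (simp add: sum_proj[OF Hs])
  qed
  ultimately have "proj Hs (3 - p) x = iota (proj Hs (3 - (3 - p)) (iota x))"
    by (rule proj_unique[OF Hs _ _ diff_le_self])
  then show ?thesis
    using p by simp
qed

lemma Qsym_proj:
  assumes D: "inD Hs" and p: "p \<le> 3"
  shows "Qsym (proj Hs p x) y = Qsym x (proj Hs p y)"
proof -
  have Hs: "decomposition Hs"
    using D by (rule inD_decomposition)
  have orth: "Qsym (proj Hs q x) (proj Hs r y) = 0" if "q \<le> 3" "r \<le> 3" "q \<noteq> r" for q r x y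
    using inD_orthogonal[OF D] proj_in[OF Hs] that by blast
  have "Qsym (proj Hs p x) y = (\<Sum>r\<le>3. Qsym (proj Hs p x) (proj Hs r y))"
    by (simp add: sum_proj[OF Hs] flip: Qsym_sum_right)
  also have "\<dots> = (\<Sum>r\<le>3. if r = p then Qsym (proj Hs p x) (proj Hs p y) else 0)"
    using p orth by (intro sum.cong) auto
  also have "\<dots> = (\<Sum>q\<le>3. Qsym (proj Hs q x) (proj Hs p y))"
    using p orth by (intro sum.cong) auto
  also have "\<dots> = Qsym x (proj Hs p y)"
    by (simp add: sum_proj[OF Hs] flip: Qsym_sum_left)
  finally show ?thesis .
qed

lemma Fset_eq_sum_proj:
  assumes Hs: "decomposition Hs" and p: "p \<le> 3" and z: "z \<in> Fset Hs p"
  shows "z = (\<Sum>q=p..3. proj Hs q z)"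
proof -
  obtain f where f: "\<forall>q\<in>{p..3}. f q \<in> Hs q" and z_eq: "z = (\<Sum>q=p..3. f q)"
    using z unfolding Fset_def by blast
  define g where "g q = (if q \<in> {p..3} then f q else 0)" for q
  have "\<forall>q\<le>3. g q \<in> Hs q"
    using f Hs by (auto simp: g_def decomposition_def subspace_0)
  moreover have "z = (\<Sum>q\<le>3. g q)"
  proof -
    have "{..3} \<inter> {q. p \<le> q} = {p..3}"
      by auto
    then show ?thesis
      by (simp add: z_eq g_def sum.If_cases)
  qed
  ultimately have "proj Hs q z = f q" if "q \<in> {p..3}" for q
    using proj_unique[OF Hs] that by (simp add: g_def)
  then show ?thesis
    by (simp add: z_eq)
qed

lemma sum_proj_in_Fset:
  assumes "decomposition Hs"
  shows "(\<Sum>q=p..3. proj Hs q x) \<in> Fset Hs p"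
  unfolding Fset_def
proof (intro CollectI exI conjI ballI)
  show "proj Hs q x \<in> Hs q" if "q \<in> {p..3}" for q
    using proj_in[OF assms] that by simp
qed (rule refl)

section \<open>Derivatives of families of linear maps\<close>

lemma has_vector_derivative_transform_ev:
  assumes "\<forall>\<^sub>F t in nhds x. f t = g t" and "(f has_vector_derivative f') (at x)"
  shows "(g has_vector_derivative f') (at x)"
proof -
  have "f x = g x"
    using assms(1) by (rule eventually_nhds_x_imp_x)
  then show ?thesis
    using assms has_vector_derivative_cong_ev[where S = UNIV and x = x and f = f and g = g] by simp
qed

lemma has_vector_derivative_unique_ev:
  assumes "\<forall>\<^sub>F t in nhds x. f t = g t"
    and "(f has_vector_derivative f') (at x)" "(g has_vector_derivative g') (at x)"
  shows "f' = g'"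
  using has_vector_derivative_transform_ev[OF assms(1,2)] assms(3) by (rule vector_derivative_unique_at)

lemma linear_vector_derivative_family:
  assumes lin: "\<forall>\<^sub>F t in nhds x. linear (F t)"
    and deriv: "\<And>v. ((\<lambda>t. F t v) has_vector_derivative F' v) (at x)"
  shows "linear F'"
proof (rule linearI)
  fix v w and r :: real
  have "\<forall>\<^sub>F t in nhds x. F t v + F t w = F t (v + w)"
    using lin by eventually_elim (simp add: linear_add)
  moreover have "((\<lambda>t. F t v + F t w) has_vector_derivative F' v + F' w) (at x)"
    using deriv[of v] deriv[of w] by (rule has_vector_derivative_add)
  ultimately have "F' v + F' w = F' (v + w)"
    by (rule has_vector_derivative_unique_ev[OF _ _ deriv])
  then show "F' (v + w) = F' v + F' w"
    by simp
  have "\<forall>\<^sub>F t in nhds x. r *\<^sub>R F t v = F t (r *\<^sub>R v)"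
    using lin by eventually_elim (simp add: linear_scale)
  moreover have "((\<lambda>t. r *\<^sub>R F t v) has_vector_derivative r *\<^sub>R F' v) (at x)"
    using deriv[of v] by (rule bounded_linear.has_vector_derivative[OF bounded_linear_scaleR_right])
  ultimately have "r *\<^sub>R F' v = F' (r *\<^sub>R v)"
    by (rule has_vector_derivative_unique_ev[OF _ _ deriv])
  then show "F' (r *\<^sub>R v) = r *\<^sub>R F' v"
    by simp
qed

lemma has_vector_derivative_linear_family_apply:
  fixes F :: "real \<Rightarrow> 'a::euclidean_space \<Rightarrow> 'b::real_normed_vector"
  assumes lin: "\<forall>\<^sub>F t in nhds x. linear (F t)"
    and F: "\<And>v. ((\<lambda>t. F t v) has_vector_derivative F' v) (at x)"
    and y: "(y has_vector_derivative y') (at x)"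
  shows "((\<lambda>t. F t (y t)) has_vector_derivative F' (y x) + F x y') (at x)"
proof -
  have lin_x: "linear (F x)"
    using lin by (rule eventually_nhds_x_imp_x)
  have lin_F': "linear F'"
    using lin F by (rule linear_vector_derivative_family)
  have basis_expansion: "L v = (\<Sum>i\<in>Basis. (v \<bullet> i) *\<^sub>R L i)" if "linear L" for L :: "'a \<Rightarrow> 'b" and v
  proof -
    have "L v = L (\<Sum>i\<in>Basis. (v \<bullet> i) *\<^sub>R i)"
      by (simp add: euclidean_representation)
    then show ?thesis
      by (simp add: linear_sum[OF that] linear_scale[OF that])
  qed
  have coord: "((\<lambda>t. y t \<bullet> i) has_real_derivative y' \<bullet> i) (at x)" for i
    using bounded_linear.has_vector_derivative[OF bounded_linear_inner_left y]
    by (simp add: has_real_derivative_iff_has_vector_derivative)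
  have deriv: "((\<lambda>t. \<Sum>i\<in>Basis. (y t \<bullet> i) *\<^sub>R F t i) has_vector_derivative
      (\<Sum>i\<in>Basis. (y x \<bullet> i) *\<^sub>R F' i + (y' \<bullet> i) *\<^sub>R F x i)) (at x)"
    by (rule has_vector_derivative_sum, rule has_vector_derivative_scaleR[OF coord F])
  have sum_eq: "(\<Sum>i\<in>Basis. (y x \<bullet> i) *\<^sub>R F' i + (y' \<bullet> i) *\<^sub>R F x i) = F' (y x) + F x y'"
    by (simp add: sum.distrib basis_expansion[OF lin_F', symmetric] basis_expansion[OF lin_x, symmetric])
  have "\<forall>\<^sub>F t in nhds x. (\<Sum>i\<in>Basis. (y t \<bullet> i) *\<^sub>R F t i) = F t (y t)"
    using lin by eventually_elim (rule basis_expansion[symmetric])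
  from has_vector_derivative_transform_ev[OF this deriv] show ?thesis
    by (simp only: sum_eq)
qed

lemma has_vector_derivative_adjoint:
  fixes k :: "real \<Rightarrow> 'a::euclidean_space \<Rightarrow> 'b::euclidean_space"
  assumes lin: "\<And>t. linear (k t)" "linear k'"
    and k: "\<And>u. ((\<lambda>t. k t u) has_vector_derivative k' u) (at x)"
  shows "((\<lambda>t. adjoint (k t) y) has_vector_derivative adjoint k' y) (at x)"
proof -
  have adjoint_expansion: "adjoint f y = (\<Sum>i\<in>Basis. (y \<bullet> f i) *\<^sub>R i)" if "linear f"
    for f :: "'a \<Rightarrow> 'b"
    using euclidean_representation[of "adjoint f y"] by (simp add: adjoint_clauses[OF that])
  have coord: "((\<lambda>t. y \<bullet> k t i) has_real_derivative y \<bullet> k' i) (at x)" for i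
    using bounded_linear.has_vector_derivative[OF bounded_linear_inner_right k[of i]]
    by (simp add: has_real_derivative_iff_has_vector_derivative)
  have "((\<lambda>t. \<Sum>i\<in>Basis. (y \<bullet> k t i) *\<^sub>R i) has_vector_derivative
      (\<Sum>i\<in>Basis. (y \<bullet> k' i) *\<^sub>R i)) (at x)"
    by (rule has_vector_derivative_sum)
      (use has_vector_derivative_scaleR[OF coord has_vector_derivative_const] in simp)
  then show ?thesis
    by (simp add: adjoint_expansion lin)
qed

section \<open>The exponential action on decompositions\<close>

lemma act_exp_flow:
  assumes "linear a"
  shows "act (exp_flow a t) v = (exp_flow a t (fst v), adjoint (exp_flow a (- t)) (snd v))"
proof -
  have "inv (exp_flow a t) = exp_flow a (- t)"
    using exp_flow_inverse[OF assms, of t] exp_flow_inverse[OF assms, of "- t"]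
    by (intro inv_unique_comp) (simp_all add: fun_eq_iff)
  then show ?thesis
    by (simp add: act_def)
qed

lemma linear_act_exp_flow: "linear a \<Longrightarrow> linear (act (exp_flow a t))"
  by (intro linearI)
    (simp_all add: act_exp_flow linear_add linear_scale linear_exp_flow adjoint_linear)

lemma act_exp_flow_inverse:
  assumes "linear a"
  shows "act (exp_flow a t) (act (exp_flow a (- t)) v) = v"
proof -
  have "adjoint (exp_flow a (- t)) (adjoint (exp_flow a t) y) = y" for y
  proof (rule vector_eq_ldot[THEN iffD1], rule allI)
    fix z
    show "z \<bullet> adjoint (exp_flow a (- t)) (adjoint (exp_flow a t) y) = z \<bullet> y"
      using exp_flow_inverse[OF assms, of t z]
      by (simp add: adjoint_clauses linear_exp_flow[OF assms] inner_commute)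
  qed
  then show ?thesis
    by (simp add: act_exp_flow[OF assms] exp_flow_inverse[OF assms])
qed

lemma act_exp_flow_0:
  assumes "linear a"
  shows "act (exp_flow a 0) = id"
proof -
  have "adjoint id = (id :: real^'n \<Rightarrow> real^'n)"
    by (rule adjoint_unique) simp
  then show ?thesis
    unfolding fun_eq_iff act_exp_flow[OF assms] by (simp add: exp_flow_0[OF assms])
qed

lemma has_vector_derivative_act_exp_flow:
  assumes a: "linear a"
  shows "((\<lambda>t. act (exp_flow a t) v) has_vector_derivative dact a v) (at 0)"
proof -
  have lin_neg: "linear (\<lambda>u. - a u)"
    using a by (simp add: linear_compose_neg)
  have "((\<lambda>t. adjoint (exp_flow (\<lambda>u. - a u) t) (snd v)) has_vector_derivative
      adjoint (\<lambda>u. - a u) (snd v)) (at 0)"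
    using lin_neg by (intro has_vector_derivative_adjoint linear_exp_flow has_vector_derivative_exp_flow)
  then show ?thesis
    unfolding act_exp_flow[OF a] dact_def exp_flow_uminus adjoint_uminus[OF a]
    by (intro has_vector_derivative_Pair has_vector_derivative_exp_flow a)
qed

lemma tvec_exp_action:
  assumes a: "linear a" and Hs: "decomposition Hs" and p: "p \<le> 3"
  shows "tvec (\<lambda>t. actD (lexp (\<lambda>u. t *\<^sub>R a u)) Hs) p x = dact a (proj Hs p x) - proj Hs p (dact a x)"
proof -
  let ?g = "\<lambda>t. act (exp_flow a t)" and ?h = "\<lambda>t. act (exp_flow a (- t))"
  have proj_t: "proj (actD (lexp (\<lambda>u. t *\<^sub>R a u)) Hs) p x = ?g t (proj Hs p (?h t x))" for t
    unfolding actD_def exp_flow_def[symmetric]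
    using act_exp_flow_inverse[OF a, of t] act_exp_flow_inverse[OF a, of "- t"]
    by (intro proj_image[OF Hs linear_act_exp_flow linear_act_exp_flow _ _ p]) (simp_all add: a)
  have "linear (\<lambda>u. - a u)"
    using a by (simp add: linear_compose_neg)
  from has_vector_derivative_act_exp_flow[OF this, of x]
  have "((\<lambda>t. ?h t x) has_vector_derivative - dact a x) (at 0)"
    by (simp only: exp_flow_uminus dact_uminus[OF a])
  from bounded_linear.has_vector_derivative[OF
      linear_proj[OF Hs p, THEN linear_conv_bounded_linear[THEN iffD1]] this]
  have "((\<lambda>t. proj Hs p (?h t x)) has_vector_derivative proj Hs p (- dact a x)) (at 0)" .
  from has_vector_derivative_linear_family_apply[where F = ?g,
      OF _ has_vector_derivative_act_exp_flow[OF a] this]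
  have "((\<lambda>t. ?g t (proj Hs p (?h t x))) has_vector_derivative
      dact a (proj Hs p (?h 0 x)) + ?g 0 (proj Hs p (- dact a x))) (at 0)"
    using linear_act_exp_flow[OF a] by simp
  then show ?thesis
    unfolding tvec_def proj_t
    by (intro vector_derivative_at) (simp add: act_exp_flow_0 a linear_neg[OF linear_proj[OF Hs p]])
qed

section \<open>Points of D\<close>

locale hodge_decomposition =
  fixes Hs :: "nat \<Rightarrow> 'n::finite HH set"
  assumes inD: "inD Hs"
begin

abbreviation P :: "nat \<Rightarrow> 'n HH \<Rightarrow> 'n HH" where
  "P \<equiv> proj Hs"

lemma decomposition: "decomposition Hs"
  using inD by (rule inD_decomposition)

lemma linear_P: "p \<le> 3 \<Longrightarrow> linear (P p)"
  by (rule linear_proj[OF decomposition])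

lemma P_in: "p \<le> 3 \<Longrightarrow> P p x \<in> Hs p"
  by (rule proj_in[OF decomposition])

lemma P_eq_if_in: "p \<le> 3 \<Longrightarrow> q \<le> 3 \<Longrightarrow> x \<in> Hs q \<Longrightarrow> P p x = (if p = q then x else 0)"
  by (rule proj_eq_if_in[OF decomposition])

lemma P_sum: "P 0 x + P 1 x + P 2 x + P 3 x = x"
  using sum_proj[OF decomposition, of x] by (simp add: sum_atMost_3)

lemma P_P [simp]: "p \<le> 3 \<Longrightarrow> q \<le> 3 \<Longrightarrow> P p (P q x) = (if p = q then P q x else 0)"
  by (rule proj_proj[OF decomposition])

lemma P_linear_simps [simp]:
  assumes "p \<le> 3"
  shows "P p (x + y) = P p x + P p y" "P p (x - y) = P p x - P p y" "P p (- x) = - P p x"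
    "P p (r *\<^sub>R x) = r *\<^sub>R P p x" "P p 0 = 0"
  using linear_P[OF assms]
  by (simp_all add: linear_add linear_diff linear_neg linear_scale linear_0)

lemma P_iota [simp]:
  "P 0 (iota x) = iota (P 3 x)" "P 1 (iota x) = iota (P 2 x)"
  "P 2 (iota x) = iota (P 1 x)" "P 3 (iota x) = iota (P 0 x)"
  using proj_iota[OF inD, of 3 "iota x"] proj_iota[OF inD, of 2 "iota x"]
    proj_iota[OF inD, of 1 "iota x"] proj_iota[OF inD, of 0 "iota x"]
  by (simp_all add: One_nat_def)

lemma Qsym_P: "p \<le> 3 \<Longrightarrow> Qsym (P p x) y = Qsym x (P p y)"
  by (rule Qsym_proj[OF inD])

(* J acts on H^(p) by (-1)^(p+1), the sign in the positivity condition of D. *)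
definition J :: "'n HH \<Rightarrow> 'n HH" where
  "J v = P 3 v - P 2 v + P 1 v - P 0 v"

lemma linear_J: "linear J"
  unfolding J_def by (rule linearI) (simp_all add: algebra_simps)

lemma J_linear_simps [simp]:
  "J (x + y) = J x + J y" "J (x - y) = J x - J y" "J (- x) = - J x" "J (r *\<^sub>R x) = r *\<^sub>R J x"
  using linear_J by (simp_all add: linear_add linear_diff linear_neg linear_scale)

lemma J_P [simp]: "J (P 0 v) = - P 0 v" "J (P 1 v) = P 1 v" "J (P 2 v) = - P 2 v" "J (P 3 v) = P 3 v"
  and P_J [simp]: "P 0 (J v) = - P 0 v" "P 1 (J v) = P 1 v" "P 2 (J v) = - P 2 v" "P 3 (J v) = P 3 v"
  by (simp_all add: J_def)

lemma J_J [simp]: "J (J v) = v"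
  using P_sum[of v] by (simp add: J_def algebra_simps)

lemma J_iota: "J (iota v) = - iota (J v)"
  by (simp add: J_def algebra_simps)

lemma Qsym_J: "Qsym (J x) y = Qsym x (J y)"
  by (simp add: J_def Qsym_P)

lemma Qsym_P_self: "p \<le> 3 \<Longrightarrow> Qsym (P p x) x = Qsym (P p x) (P p x)"
  using Qsym_P[of p "P p x" x] by simp

lemma qH_eq: "qH Hs u = Qsym (J (u, 0)) (u, 0)"
proof -
  define U where "U = (u, 0 :: real^'n)"
  have "iota U = U"
    by (simp add: U_def iota_eq_self_iff)
  then have P0: "P 0 U = iota (P 3 U)" and P1: "P 1 U = iota (P 2 U)"
    using P_iota(1,2)[of U] by simp_all
  have "qH Hs u = 2 * Qsym (P 3 U) (P 3 U) - 2 * Qsym (P 2 U) (P 2 U)"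
    by (simp add: qH_def Qf_eq_Qsym P0 P1 flip: U_def)
  also have "\<dots> = Qsym (P 3 U) (P 3 U) - Qsym (P 2 U) (P 2 U) + Qsym (P 1 U) (P 1 U) - Qsym (P 0 U) (P 0 U)"
    by (simp add: P0 P1)
  also have "\<dots> = Qsym (J U) U"
    by (simp add: J_def Qsym_P_self)
  finally show ?thesis
    by (simp add: U_def)
qed

lemma qHb_eq: "qHb Hs u v = Qsym (J (u, 0)) (v, 0)"
proof -
  have sym: "Qsym (J (v, 0)) (u, 0) = Qsym (J (u, 0)) (v, 0)"
    by (metis Qsym_J Qsym_commute)
  have "Qsym (J (u + v, 0)) (u + v, 0) = Qsym (J ((u, 0) + (v, 0))) ((u, 0) + (v, 0))"
    by simp
  also have "\<dots> = Qsym (J (u, 0)) (u, 0) + 2 * Qsym (J (u, 0)) (v, 0) + Qsym (J (v, 0)) (v, 0)"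
    unfolding J_linear_simps Qsym_simps sym by simp
  finally show ?thesis
    by (simp add: qHb_def qH_eq)
qed

lemma qHb_commute: "qHb Hs u v = qHb Hs v u"
  by (metis qHb_eq Qsym_J Qsym_commute)

lemma
  assumes "q \<le> 3"
  shows J_P_sign: "J (P q v) = (-1) ^ Suc q *\<^sub>R P q v"
    and P_J_sign: "P q (J v) = (-1) ^ Suc q *\<^sub>R P q v"
proof -
  consider "q = 0" | "q = 1" | "q = 2" | "q = 3"
    using assms by linarith
  then show "J (P q v) = (-1) ^ Suc q *\<^sub>R P q v" "P q (J v) = (-1) ^ Suc q *\<^sub>R P q v"
    by (cases; simp)+
qed

lemma P_anticommuting_same_parity:
  assumes T: "linear T" "\<And>v. J (T v) = - T (J v)"
    and p: "p \<le> 3" and q: "q \<le> 3" and parity: "even p = even q"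
  shows "P p (T (P q v)) = 0"
proof -
  have sign: "(-1) ^ Suc p = ((-1) ^ Suc q :: real)"
    using parity by (simp add: minus_one_power_iff)
  have "(-1) ^ Suc q *\<^sub>R P p (T (P q v)) = P p (T (J (P q v)))"
    using p q by (simp add: J_P_sign linear_scale[OF T(1)] linear_neg[OF T(1)])
  also have "\<dots> = - P p (J (T (P q v)))"
    using p T(2)[of "P q v"] by (simp add: minus_equation_iff[of "J _"])
  also have "\<dots> = - ((-1) ^ Suc q *\<^sub>R P p (T (P q v)))"
    using p by (simp only: P_J_sign sign)
  finally have "(-1) ^ Suc q *\<^sub>R P p (T (P q v)) = 0"
    by (simp only: vector_eq_neg_iff)
  then show ?thesis
    by simp
qed

lemma qselfadj_iff_dact_anticommutes_J:
  assumes a: "linear a"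
  shows "qselfadj Hs a \<longleftrightarrow> (\<forall>v. J (dact a v) = - dact a (J v))"
proof
  assume anti: "\<forall>v. J (dact a v) = - dact a (J v)"
  have "qHb Hs (a u) v = qHb Hs u (a v)" for u v
  proof -
    have "qHb Hs (a u) v = - Qsym (dact a (J (u, 0))) (v, 0)"
      using anti by (simp add: qHb_eq a flip: dact_Pair_0)
    also have "\<dots> = qHb Hs u (a v)"
      by (simp add: Qsym_dact a qHb_eq)
    finally show ?thesis .
  qed
  then show "qselfadj Hs a"
    using a by (simp add: qselfadj_def)
next
  assume sa: "qselfadj Hs a"
  define M where "M v = J (dact a v) + dact a (J v)" for v
  have lin_M: "linear M"
    unfolding M_def
    by (rule linearI)
      (simp_all add: linear_add[OF linear_dact[OF a]] linear_scale[OF linear_dact[OF a]] scaleR_add_right)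
  have M_iota: "iota (M v) = - M (iota v)" for v
    by (simp add: M_def dact_iota[OF a] J_iota linear_neg[OF linear_dact[OF a]])
  have M_J: "M (J v) = J (M v)" for v
    by (simp add: M_def)
  have M_fst: "M (u, 0) = 0" for u
  proof -
    have "fst (M (u, 0)) = 0"
      using M_iota[of "(u, 0)"] by (simp add: iota_eq_neg_iff)
    moreover have orth: "y \<bullet> snd (M (u, 0)) = 0" for y
    proof -
      have "y \<bullet> snd (M (u, 0)) = Qsym (M (u, 0)) (y, 0)"
        using \<open>fst (M (u, 0)) = 0\<close> by (simp add: Qsym_def)
      also have "\<dots> = Qsym (J (y, 0)) (a u, 0) - Qsym (J (u, 0)) (a y, 0)"
        by (simp add: M_def Qsym_J Qsym_dact[OF a] a Qsym_commute[of "(a u, 0)"])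
      also have "\<dots> = qHb Hs y (a u) - qHb Hs u (a y)"
        by (simp only: qHb_eq)
      also have "\<dots> = qHb Hs y (a u) - qHb Hs (a y) u"
        by (simp only: qHb_commute[of u "a y"])
      also have "\<dots> = 0"
        using sa by (simp add: qselfadj_def)
      finally show ?thesis .
    qed
    ultimately show ?thesis
      by (metis inner_eq_zero_iff prod_eq_iff fst_zero snd_zero)
  qed
  have M_snd: "M (0, y) = 0" for y
  proof -
    have "J (0, - y) = - J (0, y)"
      using J_linear_simps(3)[of "(0, y)"] by simp
    then have "iota (J (0, y)) = J (0, y)"
      using J_iota[of "(0, y)"] by simp
    then have "snd (J (0, y)) = 0"
      by (subst (asm) iota_eq_self_iff)
    then have "J (0, y) = (fst (J (0, y)), 0)"
      by (simp add: prod_eq_iff)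
    then have "M (0, y) = J (M (fst (J (0, y)), 0))"
      using M_J[of "J (0, y)"] by simp
    then show ?thesis
      by (simp add: M_fst linear_0[OF linear_J])
  qed
  have "M v = 0" for v
    using linear_add[OF lin_M, of "(fst v, 0)" "(0, snd v)"] by (simp add: M_fst M_snd)
  then show "\<forall>v. J (dact a v) = - dact a (J v)"
    by (simp add: M_def eq_neg_iff_add_eq_0)
qed

lemma qHb_ell:
  assumes a: "linear a" and w: "w \<in> Hs 3" and u: "w + iota w = (u, 0)"
  shows "qHb Hs (a u) u = - 2 * Qsym (P 0 (dact a w)) (iota w)"
proof -
  let ?T = "dact a"
  have P_w: "P p w = (if p = 3 then w else 0)" if "p \<le> 3" for p
    using P_eq_if_in[OF that _ w] by simp
  have J_w: "J w = w" and J_iota_w: "J (iota w) = - iota w"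
    by (simp_all add: J_def P_w J_iota)
  have skew: "Qsym (?T x) x = 0" for x
    using Qsym_dact[OF a, of x x] by (simp add: Qsym_commute[of x] vector_eq_neg_iff)
  have "qHb Hs (a u) u = Qsym (J (?T (w + iota w))) (w + iota w)"
    by (simp add: qHb_eq a u)
  also have "\<dots> = Qsym (?T w + iota (?T w)) (w - iota w)"
    by (simp add: Qsym_J J_w J_iota_w linear_add[OF linear_dact[OF a]] dact_iota[OF a])
  also have "\<dots> = - 2 * Qsym (?T w) (iota w)"
    by (simp add: skew Qsym_iota_left Qsym_commute[of w])
  also have "\<dots> = - 2 * Qsym (P 0 (?T w)) (iota w)"
    by (simp add: Qsym_P P_w)
  finally show ?thesis .
qed

lemma P0_eq_0_if_orthogonal:
  assumes T: "linear T" and orth: "\<forall>w\<in>Hs 3. Qsym (P 0 (T w)) (iota w) = 0" and w: "w \<in> Hs 3"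
  shows "P 0 (T w) = 0"
proof (cases "w = 0")
  case True
  then show ?thesis
    by (simp add: linear_0[OF T])
next
  case False
  have line: "Hs 3 \<subseteq> range (\<lambda>k. k *\<^sub>R w)"
    using card_ge_dim_independent[of "{w}" "Hs 3"] w False inD_dim_3[OF inD]
    by (simp add: span_singleton)
  have "Hs 0 = iota ` Hs 3"
    using inD_mirror[OF inD, of 3] by simp
  then obtain z where "z \<in> Hs 3" and z: "P 0 (T w) = iota z"
    using P_in[of 0 "T w"] by blast
  from line \<open>z \<in> Hs 3\<close> obtain k where "z = k *\<^sub>R w"
    by blast
  with z have k: "P 0 (T w) = k *\<^sub>R iota w"
    by simp
  have "iota w \<in> Hs 0" "iota w \<noteq> 0"
    using \<open>Hs 0 = iota ` Hs 3\<close> w False by auto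
  then have "Qsym (iota w) (iota w) < 0"
    using inD_definite[OF inD, of 0 "iota w"] by simp
  moreover have "k * Qsym (iota w) (iota w) = 0"
    using orth[rule_format, OF w] k by simp
  ultimately show ?thesis
    using k by simp
qed

end

section \<open>Tangent vectors\<close>

(* The identities satisfied by the derivatives D p of the projections along a curve in D. *)
locale tangent_projections = hodge_decomposition Hs for Hs :: "nat \<Rightarrow> 'n::finite HH set" +
  fixes D :: "nat \<Rightarrow> 'n::finite HH \<Rightarrow> 'n HH"
  assumes linear_D: "p \<le> 3 \<Longrightarrow> linear (D p)"
    and D_sum: "D 0 x + D 1 x + D 2 x + D 3 x = 0"
    and D_P: "p \<le> 3 \<Longrightarrow> q \<le> 3 \<Longrightarrow> D p (P q x) + P p (D q x) = (if p = q then D p x else 0)"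
    and D_iota: "p \<le> 3 \<Longrightarrow> D (3 - p) x = iota (D p (iota x))"
    and Qsym_D: "p \<le> 3 \<Longrightarrow> Qsym (D p x) y = Qsym x (D p y)"
begin

lemma D_linear_simps [simp]:
  assumes "p \<le> 3"
  shows "D p (x + y) = D p x + D p y" "D p (x - y) = D p x - D p y" "D p (- x) = - D p x"
    "D p (r *\<^sub>R x) = r *\<^sub>R D p x" "D p 0 = 0"
  using linear_D[OF assms]
  by (simp_all add: linear_add linear_diff linear_neg linear_scale linear_0)

lemma D_iota_simps [simp]:
  "D 0 (iota x) = iota (D 3 x)" "D 1 (iota x) = iota (D 2 x)"
  "D 2 (iota x) = iota (D 1 x)" "D 3 (iota x) = iota (D 0 x)"
  using D_iota[of 3 "iota x"] D_iota[of 2 "iota x"] D_iota[of 1 "iota x"] D_iota[of 0 "iota x"]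
  by (simp_all add: One_nat_def)

lemma P_D_off: "p \<le> 3 \<Longrightarrow> q \<le> 3 \<Longrightarrow> p \<noteq> q \<Longrightarrow> P p (D q x) = - D p (P q x)"
  using D_P[of p q x] by (simp add: eq_neg_iff_add_eq_0 add.commute)

lemma P_D_P_same [simp]: "p \<le> 3 \<Longrightarrow> P p (D p (P p x)) = 0"
  using D_P[of p p "P p x"] by simp

definition X :: "'n HH \<Rightarrow> 'n HH" where
  "X v = D 0 (P 0 v) + D 1 (P 1 v) + D 2 (P 2 v) + D 3 (P 3 v)"

lemma X_linear_simps [simp]:
  "X (x + y) = X x + X y" "X (x - y) = X x - X y" "X (- x) = - X x" "X (r *\<^sub>R x) = r *\<^sub>R X x"
  by (simp_all add: X_def algebra_simps)

lemma X_P [simp]: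
  "X (P 0 v) = D 0 (P 0 v)" "X (P 1 v) = D 1 (P 1 v)" "X (P 2 v) = D 2 (P 2 v)" "X (P 3 v) = D 3 (P 3 v)"
  by (simp_all add: X_def)

lemma D_eq_commutator_X:
  assumes q: "q \<le> 3"
  shows "D q v = X (P q v) - P q (X v)"
proof -
  have "D q v = D q (P 0 v) + D q (P 1 v) + D q (P 2 v) + D q (P 3 v)"
    using q by (simp flip: D_linear_simps add: P_sum)
  moreover have "q = 0 \<or> q = 1 \<or> q = 2 \<or> q = 3"
    using q by auto
  ultimately show ?thesis
    by (elim disjE) (simp_all add: X_def P_D_off)
qed

lemma X_iota: "X (iota v) = iota (X v)"
  by (simp add: X_def algebra_simps)

lemma Qsym_X: "Qsym (X v) w = - Qsym v (X w)"
proof -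
  have P_D: "P p (D p w) = D p w - D p (P p w)" if "p \<le> 3" for p
    using D_P[OF that that, of w] by (simp add: algebra_simps)
  have "Qsym (X v) w = Qsym v (P 0 (D 0 w) + P 1 (D 1 w) + P 2 (D 2 w) + P 3 (D 3 w))"
    by (simp add: X_def Qsym_D Qsym_P)
  also have "\<dots> = Qsym v (D 0 w + D 1 w + D 2 w + D 3 w) - Qsym v (X w)"
    by (simp add: P_D X_def)
  finally show ?thesis
    by (simp add: D_sum)
qed

definition S :: "'n HH \<Rightarrow> 'n HH" where
  "S v = (1/2) *\<^sub>R (X v - J (X (J v)))"

definition C :: "'n HH \<Rightarrow> 'n HH" where
  "C v = (1/2) *\<^sub>R (X v + J (X (J v)))"

lemma X_eq_S_plus_C: "X v = S v + C v"
proof -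
  have "S v + C v = (1/2 + 1/2) *\<^sub>R X v"
    unfolding S_def C_def scaleR_add_left by (simp add: algebra_simps)
  then show ?thesis
    by simp
qed

lemma linear_S: "linear S"
  unfolding S_def by (rule linearI) (simp_all add: algebra_simps)

lemma S_iota: "S (iota v) = iota (S v)"
  by (simp add: S_def J_iota X_iota)

lemma Qsym_S: "Qsym (S v) w = - Qsym v (S w)"
  by (simp add: S_def Qsym_X Qsym_J algebra_simps)

lemma J_S: "J (S v) = - S (J v)"
  by (simp add: S_def algebra_simps)

(* Under this hypothesis the J-even part C commutes with every projection. *)
context
  assumes P1_D3_P3: "\<And>w. P 1 (D 3 (P 3 w)) = 0"
begin

lemma D1_P3: "D 1 (P 3 y) = 0"
  using P_D_off[of 1 3 "P 3 y"] P1_D3_P3[of y] by simp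

lemma P3_D1_P1: "P 3 (D 1 (P 1 v)) = 0"
proof (rule Qsym_nondegenerate)
  fix y
  have "Qsym (P 3 (D 1 (P 1 v))) y = Qsym v (P 1 (D 1 (P 3 y)))"
    by (simp add: Qsym_P Qsym_D)
  then show "Qsym (P 3 (D 1 (P 1 v))) y = 0"
    by (simp add: D1_P3)
qed

lemma P0_D2_P2: "P 0 (D 2 (P 2 v)) = 0"
  using P3_D1_P1[of "iota v"] by simp

lemma P2_D0_P0: "P 2 (D 0 (P 0 v)) = 0"
  using P1_D3_P3[of "iota v"] by simp

lemma P_C_P_off:
  assumes "r \<le> 3" "q \<le> 3" "r \<noteq> q"
  shows "P r (C (P q v)) = 0"
proof -
  have "r \<in> {0, 1, 2, 3}" "q \<in> {0, 1, 2, 3}"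
    using assms(1,2) by auto
  then show ?thesis
    using assms(3) by (auto simp: C_def P1_D3_P3 P3_D1_P1 P0_D2_P2 P2_D0_P0)
qed

lemma C_P:
  assumes q: "q \<le> 3"
  shows "C (P q v) = P q (C v)"
proof -
  have C_add: "C (x + y) = C x + C y" for x y
    by (simp add: C_def algebra_simps)
  have "C v = C (P 0 v) + C (P 1 v) + C (P 2 v) + C (P 3 v)"
    using P_sum[of v] C_add by metis
  then have "P q (C v) = P q (C (P 0 v)) + P q (C (P 1 v)) + P q (C (P 2 v)) + P q (C (P 3 v))"
    using q by simp
  moreover have "C (P q v) = P 0 (C (P q v)) + P 1 (C (P q v)) + P 2 (C (P q v)) + P 3 (C (P q v))"
    by (simp add: P_sum)
  moreover have "q = 0 \<or> q = 1 \<or> q = 2 \<or> q = 3"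
    using q by auto
  ultimately show ?thesis
    by (elim disjE) (simp_all add: P_C_P_off)
qed

lemma D_eq_commutator_S:
  assumes q: "q \<le> 3"
  shows "D q v = S (P q v) - P q (S v)"
  using D_eq_commutator_X[OF q, of v] C_P[OF q, of v] q by (simp add: X_eq_S_plus_C)

end

lemma P_D_commutator_off:
  assumes D: "\<And>p x. p \<le> 3 \<Longrightarrow> D p x = T (P p x) - P p (T x)"
    and p: "p \<le> 3" and r: "r \<le> 3" "r \<noteq> p" and w: "w \<in> Hs p"
  shows "P r (D p w) = P r (T w)"
  using D[OF p, of w] P_eq_if_in[OF p p w] p r by simp

lemma S_eq_dact:
  obtains s where "qselfadj Hs s" "S = dact s"
proof -
  obtain s where s: "linear s" "S = dact s"
    using ex_dact_eq[OF linear_S S_iota Qsym_S] by blast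
  then have "qselfadj Hs s"
    using qselfadj_iff_dact_anticommutes_J J_S by simp
  then show thesis
    using s(2) by (rule that)
qed

lemma ex_qselfadj_commutator_iff:
  "(\<exists>a. qselfadj Hs a \<and> (\<forall>p\<le>3. \<forall>x. D p x = dact a (P p x) - P p (dact a x)))
    \<longleftrightarrow> (\<forall>w. P 1 (D 3 (P 3 w)) = 0)"
proof
  assume "\<exists>a. qselfadj Hs a \<and> (\<forall>p\<le>3. \<forall>x. D p x = dact a (P p x) - P p (dact a x))"
  then obtain a where sa: "qselfadj Hs a" and D: "\<And>p x. p \<le> 3 \<Longrightarrow> D p x = dact a (P p x) - P p (dact a x)"
    by blast
  have a: "linear a"
    using sa by (simp add: qselfadj_def)
  have anti: "\<And>v. J (dact a v) = - dact a (J v)"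
    using sa qselfadj_iff_dact_anticommutes_J[OF a] by blast
  show "\<forall>w. P 1 (D 3 (P 3 w)) = 0"
  proof
    fix w
    have "P 1 (D 3 (P 3 w)) = P 1 (dact a (P 3 w))"
      by (rule P_D_commutator_off[OF D]) (simp_all add: P_in)
    also have "\<dots> = 0"
      using P_anticommuting_same_parity[where T = "dact a" and p = 1 and q = 3] linear_dact[OF a] anti
      by simp
    finally show "P 1 (D 3 (P 3 w)) = 0" .
  qed
next
  assume H: "\<forall>w. P 1 (D 3 (P 3 w)) = 0"
  have D: "D p x = S (P p x) - P p (S x)" if "p \<le> 3" for p x
    by (rule D_eq_commutator_S[OF _ that]) (use H in blast)
  obtain s where s: "qselfadj Hs s" "S = dact s"
    by (rule S_eq_dact)
  show "\<exists>a. qselfadj Hs a \<and> (\<forall>p\<le>3. \<forall>x. D p x = dact a (P p x) - P p (dact a x))"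
    using s D by (intro exI[of _ s]) simp
qed

lemma ex_qselfadj_ell_commutator_iff:
  "(\<exists>a. qselfadj Hs a \<and> (\<forall>u\<in>ell Hs. qHb Hs (a u) u = 0)
      \<and> (\<forall>p\<le>3. \<forall>x. D p x = dact a (P p x) - P p (dact a x)))
    \<longleftrightarrow> (\<forall>w. P 1 (D 3 (P 3 w)) = 0 \<and> P 0 (D 3 (P 3 w)) = 0)"
proof
  assume "\<exists>a. qselfadj Hs a \<and> (\<forall>u\<in>ell Hs. qHb Hs (a u) u = 0)
      \<and> (\<forall>p\<le>3. \<forall>x. D p x = dact a (P p x) - P p (dact a x))"
  then obtain a where sa: "qselfadj Hs a" and ell: "\<forall>u\<in>ell Hs. qHb Hs (a u) u = 0"
    and D: "\<And>p x. p \<le> 3 \<Longrightarrow> D p x = dact a (P p x) - P p (dact a x)"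
    by blast
  have a: "linear a"
    using sa by (simp add: qselfadj_def)
  have "\<forall>w. P 1 (D 3 (P 3 w)) = 0"
    using ex_qselfadj_commutator_iff sa D by blast
  moreover have "P 0 (D 3 (P 3 w)) = 0" for w
  proof -
    have "\<forall>w\<in>Hs 3. Qsym (P 0 (dact a w)) (iota w) = 0"
    proof
      fix w
      assume w: "w \<in> Hs 3"
      then have "fst w + fst w \<in> ell Hs"
        by (auto simp: ell_def plus_iota_eq)
      then show "Qsym (P 0 (dact a w)) (iota w) = 0"
        using ell qHb_ell[OF a w plus_iota_eq] by simp
    qed
    then have "P 0 (dact a (P 3 w)) = 0"
      by (rule P0_eq_0_if_orthogonal[OF linear_dact[OF a]]) (simp add: P_in)
    moreover have "P 0 (D 3 (P 3 w)) = P 0 (dact a (P 3 w))"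
      by (rule P_D_commutator_off[OF D]) (simp_all add: P_in)
    ultimately show ?thesis
      by simp
  qed
  ultimately show "\<forall>w. P 1 (D 3 (P 3 w)) = 0 \<and> P 0 (D 3 (P 3 w)) = 0"
    by blast
next
  assume H: "\<forall>w. P 1 (D 3 (P 3 w)) = 0 \<and> P 0 (D 3 (P 3 w)) = 0"
  have D: "D p x = S (P p x) - P p (S x)" if "p \<le> 3" for p x
    by (rule D_eq_commutator_S[OF _ that]) (use H in blast)
  obtain s where s: "qselfadj Hs s" "S = dact s"
    by (rule S_eq_dact)
  have "qHb Hs (s u) u = 0" if u: "u \<in> ell Hs" for u
  proof -
    obtain w where w: "w \<in> Hs 3" and wu: "w + iota w = (u, 0)"
      using u unfolding ell_def by blast
    have "P 0 (S w) = P 0 (D 3 (P 3 w))"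
      using D[of 3 w] P_eq_if_in[OF _ _ w, of 3] by simp
    then have "P 0 (dact s w) = 0"
      using H s(2) by simp
    moreover have "linear s"
      using s(1) by (simp add: qselfadj_def)
    ultimately show ?thesis
      using qHb_ell[OF _ w wu] by simp
  qed
  then show "\<exists>a. qselfadj Hs a \<and> (\<forall>u\<in>ell Hs. qHb Hs (a u) u = 0)
      \<and> (\<forall>p\<le>3. \<forall>x. D p x = dact a (P p x) - P p (dact a x))"
    using s D by (intro exI[of _ s]) simp
qed

end

locale tangent_curve =
  fixes Hs :: "nat \<Rightarrow> 'n::finite HH set" and c :: "real \<Rightarrow> nat \<Rightarrow> 'n HH set"
  assumes inD: "inD Hs" and tcurve: "tcurve Hs c"
begin

lemma eventually_inD: "\<forall>\<^sub>F t in nhds 0. inD (c t)"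
  using tcurve by (simp add: tcurve_def)

lemma proj_c_0: "proj (c 0) = proj Hs"
  using tcurve by (intro proj_cong) (simp add: tcurve_def)

lemma has_vector_derivative_proj:
  assumes "p \<le> 3"
  shows "((\<lambda>t. proj (c t) p x) has_vector_derivative tvec c p x) (at 0)"
proof -
  have "(\<lambda>t. proj (c t) p x) differentiable (at 0)"
    using tcurve assms unfolding tcurve_def by blast
  then show ?thesis
    unfolding tvec_def by (rule vector_derivative_works[THEN iffD1])
qed

lemma eventually_linear_proj: "p \<le> 3 \<Longrightarrow> \<forall>\<^sub>F t in nhds 0. linear (proj (c t) p)"
  using eventually_inD by eventually_elim (simp add: linear_proj inD_decomposition)

lemma has_vector_derivative_proj_apply:
  assumes "p \<le> 3" and "(y has_vector_derivative y') (at 0)"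
  shows "((\<lambda>t. proj (c t) p (y t)) has_vector_derivative tvec c p (y 0) + proj Hs p y') (at 0)"
  using has_vector_derivative_linear_family_apply[OF eventually_linear_proj has_vector_derivative_proj assms(2)]
    assms(1) by (simp add: proj_c_0)

lemma linear_tvec: "p \<le> 3 \<Longrightarrow> linear (tvec c p)"
  using eventually_linear_proj has_vector_derivative_proj by (rule linear_vector_derivative_family)

lemma tvec_sum: "tvec c 0 x + tvec c 1 x + tvec c 2 x + tvec c 3 x = 0"
proof -
  have "\<forall>\<^sub>F t in nhds 0. (\<Sum>q\<le>3. proj (c t) q x) = x"
    using eventually_inD by eventually_elim (simp add: sum_proj inD_decomposition)
  from has_vector_derivative_unique_ev[OF this
      has_vector_derivative_sum[OF has_vector_derivative_proj] has_vector_derivative_const]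
  show ?thesis
    by (simp add: sum_atMost_3)
qed

lemma tvec_proj:
  assumes "p \<le> 3" "q \<le> 3"
  shows "tvec c p (proj Hs q x) + proj Hs p (tvec c q x) = (if p = q then tvec c p x else 0)"
proof -
  have "\<forall>\<^sub>F t in nhds 0. proj (c t) p (proj (c t) q x) = (if p = q then proj (c t) q x else 0)"
    using eventually_inD by eventually_elim (simp add: proj_proj inD_decomposition assms)
  from has_vector_derivative_unique_ev[OF this
      has_vector_derivative_proj_apply[OF assms(1) has_vector_derivative_proj[OF assms(2)]]]
  show ?thesis
    using has_vector_derivative_proj[OF assms(2)] by (cases "p = q") (simp_all add: proj_c_0)
qed

lemma tvec_iota:
  assumes "p \<le> 3"
  shows "tvec c (3 - p) x = iota (tvec c p (iota x))"
proof -
  have "\<forall>\<^sub>F t in nhds 0. proj (c t) (3 - p) x = iota (proj (c t) p (iota x))"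
    using eventually_inD by eventually_elim (simp add: proj_iota assms)
  from has_vector_derivative_unique_ev[OF this has_vector_derivative_proj
      bounded_linear.has_vector_derivative[OF linear_iota[THEN linear_conv_bounded_linear[THEN iffD1]]
        has_vector_derivative_proj[OF assms]]]
  show ?thesis
    by simp
qed

lemma Qsym_tvec:
  assumes "p \<le> 3"
  shows "Qsym (tvec c p x) y = Qsym x (tvec c p y)"
proof -
  have "\<forall>\<^sub>F t in nhds 0. Qsym (proj (c t) p x) y = Qsym x (proj (c t) p y)"
    using eventually_inD by eventually_elim (simp add: Qsym_proj assms)
  from has_vector_derivative_unique_ev[OF this
      bounded_linear.has_vector_derivative[OF bounded_linear_Qsym_left has_vector_derivative_proj[OF assms]]
      bounded_linear.has_vector_derivative[OF bounded_linear_Qsym_right has_vector_derivative_proj[OF assms]]]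
  show ?thesis .
qed

sublocale tangent_projections Hs "tvec c"
  using inD by unfold_locales
    (simp_all add: linear_add linear_scale linear_tvec tvec_sum tvec_proj tvec_iota Qsym_tvec)

lemma P_tvec_P_in:
  assumes p: "p \<le> 3" and q: "q \<le> 3" and r: "r \<le> 3" "r \<noteq> q" and w: "w \<in> Hs p"
  shows "P r (tvec c q w) = (if q = p then P r (tvec c p w) else 0)"
proof (cases "q = p")
  case True
  then show ?thesis
    by simp
next
  case False
  then show ?thesis
    using P_D_off[OF r(1) q r(2), of w] P_eq_if_in[OF q p w] r(1) by simp
qed

lemma projAlongF_derivative:
  assumes p: "p \<le> 3" and w: "w \<in> Hs p"
    and wt: "\<forall>\<^sub>F t in nhds 0. wt t \<in> Fset (c t) p" "wt 0 = w" "(wt has_vector_derivative wd) (at 0)"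
  shows "projAlongF (c 0) p wd = (\<Sum>r<p. P r (tvec c p w))"
proof -
  have "\<forall>\<^sub>F t in nhds 0. (\<Sum>q=p..3. proj (c t) q (wt t)) = wt t"
    using eventually_inD wt(1)
    by eventually_elim (rule Fset_eq_sum_proj[OF inD_decomposition p, symmetric])
  moreover have "((\<lambda>t. \<Sum>q=p..3. proj (c t) q (wt t)) has_vector_derivative
      (\<Sum>q=p..3. tvec c q w + P q wd)) (at 0)"
    by (rule has_vector_derivative_sum) (use has_vector_derivative_proj_apply[OF _ wt(3)] wt(2) in simp)
  ultimately have wd: "(\<Sum>q=p..3. tvec c q w + P q wd) = wd"
    using wt(3) by (rule has_vector_derivative_unique_ev)
  have "P r wd = P r (tvec c p w)" if r: "r < p" for r
  proof -
    have "P r wd = P r (\<Sum>q=p..3. tvec c q w + P q wd)"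
      by (simp only: wd)
    also have "\<dots> = (\<Sum>q=p..3. P r (tvec c q w) + P r (P q wd))"
      using r p by (simp add: linear_sum[OF linear_P])
    also have "\<dots> = (\<Sum>q=p..3. if q = p then P r (tvec c p w) else 0)"
      using r p by (intro sum.cong) (simp_all add: P_tvec_P_in[OF p _ _ _ w])
    also have "\<dots> = P r (tvec c p w)"
      using p by simp
    finally show ?thesis .
  qed
  then show ?thesis
    by (simp add: projAlongF_def proj_c_0)
qed

lemma phi_eq:
  assumes p: "p \<le> 3" and w: "w \<in> Hs p"
  shows "phi c p w = (\<Sum>r<p. P r (tvec c p w))"
  unfolding phi_def
proof (rule the_equality)
  show "\<forall>wt. (\<forall>\<^sub>F t in nhds 0. wt t \<in> Fset (c t) p) \<and> wt 0 = w \<and> wt differentiable (at 0)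
      \<longrightarrow> projAlongF (c 0) p (vector_derivative wt (at 0)) = (\<Sum>r<p. P r (tvec c p w))"
  proof (intro allI impI, elim conjE)
    fix wt :: "real \<Rightarrow> 'n HH"
    assume "\<forall>\<^sub>F t in nhds 0. wt t \<in> Fset (c t) p" "wt 0 = w" "wt differentiable (at 0)"
    then show "projAlongF (c 0) p (vector_derivative wt (at 0)) = (\<Sum>r<p. P r (tvec c p w))"
      by (intro projAlongF_derivative[OF p w, of wt]) (simp_all add: vector_derivative_works[symmetric])
  qed
  let ?wt = "\<lambda>t. \<Sum>q=p..3. proj (c t) q w"
  have "\<forall>\<^sub>F t in nhds 0. ?wt t \<in> Fset (c t) p"
    using eventually_inD by eventually_elim (simp add: sum_proj_in_Fset inD_decomposition)
  moreover have "?wt 0 = w"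
  proof -
    have "?wt 0 = (\<Sum>q=p..3. if q = p then w else 0)"
      unfolding proj_c_0 by (rule sum.cong) (auto simp: P_eq_if_in[OF _ p w])
    then show ?thesis
      using p by simp
  qed
  moreover have "?wt differentiable (at 0)"
    by (rule differentiableI_vector, rule has_vector_derivative_sum, rule has_vector_derivative_proj) simp
  ultimately have admissible: "\<forall>\<^sub>F t in nhds 0. ?wt t \<in> Fset (c t) p" "?wt 0 = w"
    "(?wt has_vector_derivative vector_derivative ?wt (at 0)) (at 0)"
    by (simp_all add: vector_derivative_works[symmetric])
  fix v
  assume "\<forall>wt. (\<forall>\<^sub>F t in nhds 0. wt t \<in> Fset (c t) p) \<and> wt 0 = w \<and> wt differentiable (at 0)
      \<longrightarrow> projAlongF (c 0) p (vector_derivative wt (at 0)) = v"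
  then have "projAlongF (c 0) p (vector_derivative ?wt (at 0)) = v"
    using admissible \<open>?wt differentiable (at 0)\<close> by simp
  then show "v = (\<Sum>r<p. P r (tvec c p w))"
    using projAlongF_derivative[OF p w admissible] by simp
qed

lemma phi_3: "w \<in> Hs 3 \<Longrightarrow> phi c 3 w = P 0 (tvec c 3 w) + P 1 (tvec c 3 w) + P 2 (tvec c 3 w)"
proof -
  have "{..<3::nat} = {0, 1, 2}"
    by auto
  then show "w \<in> Hs 3 \<Longrightarrow> ?thesis"
    by (simp add: phi_eq add.assoc)
qed

lemma phi_2: "w \<in> Hs 2 \<Longrightarrow> phi c 2 w = P 0 (tvec c 2 w) + P 1 (tvec c 2 w)"
proof -
  have "{..<2::nat} = {0, 1}"
    by auto
  then show "w \<in> Hs 2 \<Longrightarrow> ?thesis"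
    by (simp add: phi_eq)
qed

lemma phi_1: "w \<in> Hs 1 \<Longrightarrow> phi c 1 w = P 0 (tvec c 1 w)"
  by (simp add: phi_eq lessThan_Suc One_nat_def)

lemma phi_1_subset: "phi c 1 ` Hs 1 \<subseteq> Hs 0"
  by (rule image_subsetI) (simp add: phi_1 P_in)

lemma phi_3_subset_2_0_iff:
  "phi c 3 ` Hs 3 \<subseteq> {a + b |a b. a \<in> Hs 2 \<and> b \<in> Hs 0} \<longleftrightarrow> (\<forall>w. P 1 (tvec c 3 (P 3 w)) = 0)"
proof
  assume phi: "phi c 3 ` Hs 3 \<subseteq> {a + b |a b. a \<in> Hs 2 \<and> b \<in> Hs 0}"
  show "\<forall>w. P 1 (tvec c 3 (P 3 w)) = 0"
  proof
    fix w
    have "phi c 3 (P 3 w) \<in> {a + b |a b. a \<in> Hs 2 \<and> b \<in> Hs 0}"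
      using subsetD[OF phi imageI[OF P_in[of 3 w]]] by simp
    then obtain a b where "phi c 3 (P 3 w) = a + b" "a \<in> Hs 2" "b \<in> Hs 0"
      by blast
    then have "P 1 (phi c 3 (P 3 w)) = 0"
      using P_eq_if_in[of 1 2 a] P_eq_if_in[of 1 0 b] by simp
    then show "P 1 (tvec c 3 (P 3 w)) = 0"
      by (simp add: phi_3 P_in)
  qed
next
  assume H: "\<forall>w. P 1 (tvec c 3 (P 3 w)) = 0"
  show "phi c 3 ` Hs 3 \<subseteq> {a + b |a b. a \<in> Hs 2 \<and> b \<in> Hs 0}"
  proof (rule image_subsetI)
    fix w
    assume "w \<in> Hs 3"
    then have "phi c 3 w = P 2 (tvec c 3 w) + P 0 (tvec c 3 w)"
      using H[rule_format, of w] P_eq_if_in[of 3 3 w] by (simp add: phi_3)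
    moreover have "P 2 (tvec c 3 w) \<in> Hs 2" "P 0 (tvec c 3 w) \<in> Hs 0"
      by (simp_all add: P_in)
    ultimately show "phi c 3 w \<in> {a + b |a b. a \<in> Hs 2 \<and> b \<in> Hs 0}"
      by blast
  qed
qed

lemma phi_3_subset_2_iff:
  "phi c 3 ` Hs 3 \<subseteq> Hs 2 \<longleftrightarrow> (\<forall>w. P 1 (tvec c 3 (P 3 w)) = 0 \<and> P 0 (tvec c 3 (P 3 w)) = 0)"
proof
  assume phi: "phi c 3 ` Hs 3 \<subseteq> Hs 2"
  show "\<forall>w. P 1 (tvec c 3 (P 3 w)) = 0 \<and> P 0 (tvec c 3 (P 3 w)) = 0"
  proof
    fix w
    have "phi c 3 (P 3 w) \<in> Hs 2"
      using subsetD[OF phi imageI[OF P_in[of 3 w]]] by simp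
    then have "P 1 (phi c 3 (P 3 w)) = 0" "P 0 (phi c 3 (P 3 w)) = 0"
      using P_eq_if_in[of 1 2] P_eq_if_in[of 0 2] by simp_all
    then show "P 1 (tvec c 3 (P 3 w)) = 0 \<and> P 0 (tvec c 3 (P 3 w)) = 0"
      by (simp add: phi_3 P_in)
  qed
next
  assume H: "\<forall>w. P 1 (tvec c 3 (P 3 w)) = 0 \<and> P 0 (tvec c 3 (P 3 w)) = 0"
  have "phi c 3 w = P 2 (tvec c 3 w)" if "w \<in> Hs 3" for w
    using that H[rule_format, of w] P_eq_if_in[of 3 3 w] by (simp add: phi_3)
  then show "phi c 3 ` Hs 3 \<subseteq> Hs 2"
    by (intro image_subsetI) (simp add: P_in)
qed

lemma phi_2_subset:
  assumes "\<forall>w. P 1 (tvec c 3 (P 3 w)) = 0"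
  shows "phi c 2 ` Hs 2 \<subseteq> Hs 1"
proof
  fix v
  assume "v \<in> phi c 2 ` Hs 2"
  then obtain w where w: "w \<in> Hs 2" and v: "v = phi c 2 w"
    by blast
  have "P 0 (tvec c 2 w) = 0"
    using P0_D2_P2[of w] assms P_eq_if_in[of 2 2 w] w by simp
  then show "v \<in> Hs 1"
    by (simp add: v phi_2[OF w] P_in)
qed

lemma is_exp_tangent_iff:
  "linear a \<Longrightarrow> is_exp_tangent Hs c a \<longleftrightarrow> (\<forall>p\<le>3. \<forall>x. tvec c p x = dact a (P p x) - P p (dact a x))"
  by (simp add: is_exp_tangent_def tvec_exp_action decomposition)

lemma qselfadj_exp_tangent_iff:
  "qselfadj Hs a \<and> is_exp_tangent Hs c a
    \<longleftrightarrow> qselfadj Hs a \<and> (\<forall>p\<le>3. \<forall>x. tvec c p x = dact a (P p x) - P p (dact a x))"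
  using is_exp_tangent_iff[of a] by (auto simp: qselfadj_def)

lemma horizontal_iff: "horizontal Hs c \<longleftrightarrow> (\<forall>w. P 1 (tvec c 3 (P 3 w)) = 0)"
  unfolding horizontal_def qselfadj_exp_tangent_iff by (rule ex_qselfadj_commutator_iff)

lemma transverse_iff:
  "transverse Hs c \<longleftrightarrow> (\<forall>w. P 1 (tvec c 3 (P 3 w)) = 0 \<and> P 0 (tvec c 3 (P 3 w)) = 0)"
proof -
  have "transverse Hs c \<longleftrightarrow> (\<exists>a. qselfadj Hs a \<and> (\<forall>u\<in>ell Hs. qHb Hs (a u) u = 0)
      \<and> (\<forall>p\<le>3. \<forall>x. tvec c p x = dact a (P p x) - P p (dact a x)))"
    unfolding transverse_def using qselfadj_exp_tangent_iff by blast
  then show ?thesis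
    by (simp only: ex_qselfadj_ell_commutator_iff)
qed

end

theorem mainTheorem15:
  fixes Hs :: "nat \<Rightarrow> ((real^'n) \<times> (real^'n)) set"
    and c :: "real \<Rightarrow> nat \<Rightarrow> ((real^'n) \<times> (real^'n)) set"
  assumes "inD Hs" and "tcurve Hs c"
  shows "(horizontal Hs c \<longleftrightarrow> phi c 3 ` Hs 3 \<subseteq> {a + b | a b. a \<in> Hs 2 \<and> b \<in> Hs 0})
       \<and> (horizontal Hs c \<longrightarrow> phi c 2 ` Hs 2 \<subseteq> Hs 1)
       \<and> (transverse Hs c \<longleftrightarrow> phi c 3 ` Hs 3 \<subseteq> Hs 2)
       \<and> (transverse Hs c \<longrightarrow> (\<forall>p\<in>{1,2,3}. phi c p ` Hs p \<subseteq> Hs (p - 1)))"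
proof -
  interpret tangent_curve Hs c
    using assms by (rule tangent_curve.intro)
  have horizontal: "horizontal Hs c \<longleftrightarrow> phi c 3 ` Hs 3 \<subseteq> {a + b | a b. a \<in> Hs 2 \<and> b \<in> Hs 0}"
    by (simp only: horizontal_iff phi_3_subset_2_0_iff)
  have transverse: "transverse Hs c \<longleftrightarrow> phi c 3 ` Hs 3 \<subseteq> Hs 2"
    by (simp only: transverse_iff phi_3_subset_2_iff)
  have phi_2: "horizontal Hs c \<Longrightarrow> phi c 2 ` Hs 2 \<subseteq> Hs 1"
    by (simp add: horizontal_iff phi_2_subset)
  have "transverse Hs c \<Longrightarrow> horizontal Hs c"
    by (simp add: transverse_iff horizontal_iff)
  then have "transverse Hs c \<longrightarrow> (\<forall>p\<in>{1,2,3}. phi c p ` Hs p \<subseteq> Hs (p - 1))"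
    using phi_1_subset phi_2 transverse by (simp add: One_nat_def)
  with horizontal transverse phi_2 show ?thesis
    by blast
qed

end
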